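(* Let $1\le p\le q\le\infty$ and let $X$ be a Tychonoff space. Then: (i) $C_p(X)$ has the $EGP_{(p,q)}$ property if and only if $X$ is discrete; (ii) $C_p(X)$ has the $b$-$EGP_{(p,q)}$ property if and only if every functionally bounded subset of $X$ is finite; (iii) $C_p(X)$ always has the $prEGP_{(p,q)}$ property and hence the $prGP_{(p,q)}$ property.
   Context: $C_p(X)$ is the space of continuous scalar functions on $X$ with the pointwise topology. A subset $A$ of $X$ is functionally bounded if $f(A)$ is bounded for every continuous $f$ on $X$. For $A\subseteq E$ and $\chi\in E'$, $\|\chi\|_A:=\sup\{|\chi(x)|:x\in A\cup\{0\}\}$. A sequence $(\chi_n)$ in $E'$ is weak$^*$ $p$-summable if $(\chi_n(x))_n\in\ell_p$ for every $x\in E$ (in $c_0$ if $p=\infty$). A nonempty $A\subseteq E$ is $(p,q)$-limited (resp. $(p,q)$-$\mathcal E$-limited) if for every (resp. every equicontinuous) weak$^*$ $p$-summable sequence $(\chi_n)$ in $E'$, $(\|\chi_n\|_A)_n\in\ell_q$ if $q<\infty$ and $\|\chi_n\|_A\to0$ if $q=\infty$. $E$ has the $EGP_{(p,q)}$ property if every $(p,q)$-$\mathcal E$-limited set is relatively compact; the $prEGP_{(p,q)}$ (resp. $prGP_{(p,q)}$) property if every $(p,q)$-$\mathcal E$-limited (resp. $(p,q)$-limited) set is precompact; the $b$-$EGP_{(p,q)}$ property if every $(p,q)$-$\mathcal E$-limited set is precompact in the strong topology $\beta(E,E')$. *)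

theory Defs
  imports "HOL-Analysis.Analysis" "HOL-Library.Function_Algebras"
begin

instantiation "fun" :: (type, real_vector) real_vector
begin
definition scaleR_fun :: "real \<Rightarrow> ('a \<Rightarrow> 'b) \<Rightarrow> 'a \<Rightarrow> 'b" where
  "scaleR_fun c f = (\<lambda>x. c *\<^sub>R f x)"
instance
  by standard (auto simp: scaleR_fun_def fun_eq_iff scaleR_add_right scaleR_add_left)
end

text \<open>Continuous linear functionals on E (the dual E'); functionals are normalised
  to vanish outside E.\<close>
definition dual_space :: "'v::real_vector topology \<Rightarrow> ('v \<Rightarrow> real) set" where
  "dual_space T = {\<phi>.
     (\<forall>x\<in>topspace T. \<forall>y\<in>topspace T. \<phi> (x + y) = \<phi> x + \<phi> y) \<and>
     (\<forall>c. \<forall>x\<in>topspace T. \<phi> (c *\<^sub>R x) = c * \<phi> x) \<and>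
     continuous_map T euclideanreal \<phi> \<and>
     (\<forall>x. x \<notin> topspace T \<longrightarrow> \<phi> x = 0)}"

definition equicontinuous_set :: "'v::real_vector topology \<Rightarrow> ('v \<Rightarrow> real) set \<Rightarrow> bool" where
  "equicontinuous_set T H \<longleftrightarrow>
     (\<forall>\<epsilon>>0. \<exists>U. openin T U \<and> 0 \<in> U \<and> (\<forall>\<phi>\<in>H. \<forall>x\<in>U. \<bar>\<phi> x\<bar> \<le> \<epsilon>))"

text \<open>Membership in l_p for 1 \<le> p < \<infinity>, and in c_0 for p = \<infinity>.\<close>
definition in_lp :: "ereal \<Rightarrow> (nat \<Rightarrow> real) \<Rightarrow> bool" where
  "in_lp p a \<longleftrightarrow>
     (if p = \<infinity> then a \<longlonglongrightarrow> 0 else summable (\<lambda>n. \<bar>a n\<bar> powr real_of_ereal p))"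

definition norm_on :: "'v::real_vector set \<Rightarrow> ('v \<Rightarrow> real) \<Rightarrow> ereal" where
  "norm_on A \<phi> = (SUP x\<in>A \<union> {0}. ereal \<bar>\<phi> x\<bar>)"

definition in_lq_ereal :: "ereal \<Rightarrow> (nat \<Rightarrow> ereal) \<Rightarrow> bool" where
  "in_lq_ereal q s \<longleftrightarrow>
     (if q = \<infinity> then s \<longlonglongrightarrow> 0
      else (\<forall>n. s n \<noteq> \<infinity>) \<and> summable (\<lambda>n. real_of_ereal (s n) powr real_of_ereal q))"

definition weak_star_summable :: "ereal \<Rightarrow> 'v::real_vector topology \<Rightarrow> (nat \<Rightarrow> 'v \<Rightarrow> real) \<Rightarrow> bool" where
  "weak_star_summable p T \<phi> \<longleftrightarrow>
     (\<forall>n. \<phi> n \<in> dual_space T) \<and> (\<forall>x\<in>topspace T. in_lp p (\<lambda>n. \<phi> n x))"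

definition pq_limited :: "ereal \<Rightarrow> ereal \<Rightarrow> 'v::real_vector topology \<Rightarrow> 'v set \<Rightarrow> bool" where
  "pq_limited p q T A \<longleftrightarrow> A \<noteq> {} \<and> A \<subseteq> topspace T \<and>
     (\<forall>\<phi>. weak_star_summable p T \<phi> \<longrightarrow> in_lq_ereal q (\<lambda>n. norm_on A (\<phi> n)))"

definition pq_E_limited :: "ereal \<Rightarrow> ereal \<Rightarrow> 'v::real_vector topology \<Rightarrow> 'v set \<Rightarrow> bool" where
  "pq_E_limited p q T A \<longleftrightarrow> A \<noteq> {} \<and> A \<subseteq> topspace T \<and>
     (\<forall>\<phi>. weak_star_summable p T \<phi> \<and> equicontinuous_set T (range \<phi>)
           \<longrightarrow> in_lq_ereal q (\<lambda>n. norm_on A (\<phi> n)))"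

definition relatively_compact :: "'v topology \<Rightarrow> 'v set \<Rightarrow> bool" where
  "relatively_compact T A \<longleftrightarrow> compactin T (T closure_of A)"

definition precompact :: "'v::real_vector topology \<Rightarrow> 'v set \<Rightarrow> bool" where
  "precompact T A \<longleftrightarrow>
     (\<forall>U. openin T U \<and> 0 \<in> U \<longrightarrow>
        (\<exists>F. finite F \<and> F \<subseteq> topspace T \<and> A \<subseteq> (\<Union>f\<in>F. (\<lambda>u. f + u) ` U)))"

text \<open>Precompact in the strong topology beta(E,E'), whose basic 0-neighbourhoods are
  the sets eps * B-polar with B a weak*-bounded subset of E'.\<close>
definition strongly_precompact :: "'v::real_vector topology \<Rightarrow> 'v set \<Rightarrow> bool" where
  "strongly_precompact T A \<longleftrightarrow>
     (\<forall>B \<subseteq> dual_space T. (\<forall>x\<in>topspace T. bounded ((\<lambda>\<phi>. \<phi> x) ` B)) \<longrightarrow>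
        (\<forall>\<epsilon>>0. \<exists>F. finite F \<and> F \<subseteq> topspace T \<and>
           A \<subseteq> (\<Union>f\<in>F. (\<lambda>u. f + u) ` {u\<in>topspace T. \<forall>\<phi>\<in>B. \<bar>\<phi> u\<bar> \<le> \<epsilon>})))"

definition EGP :: "ereal \<Rightarrow> ereal \<Rightarrow> 'v::real_vector topology \<Rightarrow> bool" where
  "EGP p q T \<longleftrightarrow> (\<forall>A. pq_E_limited p q T A \<longrightarrow> relatively_compact T A)"

definition prEGP :: "ereal \<Rightarrow> ereal \<Rightarrow> 'v::real_vector topology \<Rightarrow> bool" where
  "prEGP p q T \<longleftrightarrow> (\<forall>A. pq_E_limited p q T A \<longrightarrow> precompact T A)"

definition prGP :: "ereal \<Rightarrow> ereal \<Rightarrow> 'v::real_vector topology \<Rightarrow> bool" where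
  "prGP p q T \<longleftrightarrow> (\<forall>A. pq_limited p q T A \<longrightarrow> precompact T A)"

definition bEGP :: "ereal \<Rightarrow> ereal \<Rightarrow> 'v::real_vector topology \<Rightarrow> bool" where
  "bEGP p q T \<longleftrightarrow> (\<forall>A. pq_E_limited p q T A \<longrightarrow> strongly_precompact T A)"

text \<open>Continuous real functions on X (normalised to 0 outside topspace X), with the
  topology of pointwise convergence (subspace of the product topology on 'a \<Rightarrow> real).\<close>
definition Cp :: "'a topology \<Rightarrow> ('a \<Rightarrow> real) topology" where
  "Cp X = subtopology euclidean
     {f. continuous_map X euclideanreal f \<and> (\<forall>x. x \<notin> topspace X \<longrightarrow> f x = 0)}"

definition tychonoff_space :: "'a topology \<Rightarrow> bool" where
  "tychonoff_space X \<longleftrightarrow> completely_regular_space X \<and> Hausdorff_space X"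

definition functionally_bounded :: "'a topology \<Rightarrow> 'a set \<Rightarrow> bool" where
  "functionally_bounded X A \<longleftrightarrow> A \<subseteq> topspace X \<and>
     (\<forall>f. continuous_map X euclideanreal f \<longrightarrow> bounded (f ` A))"

end

theory Submission
  imports Defs
begin

(* Every continuous linear functional on C_p(X) is a finite combination of point evaluations.
   Hence a (p,q)-E-limited set is pointwise bounded (test it against the sequence 2^-n delta_x),
   and a pointwise bounded set is precompact, being bounded on each finite set of points; for
   discrete X it is even relatively compact by Tychonoff's theorem.  Conversely the unit ball of
   C_p(X) is (p,q)-E-limited, because an equicontinuous weak* p-summable sequence lives on one
   finite set of points.  Its pointwise closure contains the indicator of every point, so
   relative compactness forces X to be discrete; the evaluations at a functionally bounded set D
   are weak* bounded and separate the bumps at points of D, so strong precompactness forces D to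
   be finite.  Finally, if functionally bounded sets are finite, a gliding hump along an unbounded
   continuous function shows that the supports of a weak* bounded set of functionals lie in one
   finite set, so strong neighbourhoods of 0 contain pointwise ones. *)

definition Cp_carrier :: "'a topology \<Rightarrow> ('a \<Rightarrow> real) set" where
  "Cp_carrier X = {f. continuous_map X euclideanreal f \<and> (\<forall>x. x \<notin> topspace X \<longrightarrow> f x = 0)}"

definition Cp_unit_ball :: "'a topology \<Rightarrow> ('a \<Rightarrow> real) set" where
  "Cp_unit_ball X = {g \<in> Cp_carrier X. \<forall>y. \<bar>g y\<bar> \<le> 1}"

lemma Cp_eq_subtopology: "Cp X = subtopology euclidean (Cp_carrier X)"
  by (simp add: Cp_def Cp_carrier_def)

lemma topspace_Cp: "topspace (Cp X) = Cp_carrier X"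
  by (simp add: Cp_eq_subtopology)

lemma Cp_carrier_zero: "(0::'a \<Rightarrow> real) \<in> Cp_carrier X"
  by (simp add: Cp_carrier_def zero_fun_def)

lemma Cp_carrier_add: "f \<in> Cp_carrier X \<Longrightarrow> g \<in> Cp_carrier X \<Longrightarrow> f + g \<in> Cp_carrier X"
  by (auto simp add: Cp_carrier_def plus_fun_def intro: continuous_map_add)

lemma Cp_carrier_scaleR: "f \<in> Cp_carrier X \<Longrightarrow> c *\<^sub>R f \<in> Cp_carrier X"
  by (auto simp add: Cp_carrier_def scaleR_fun_def intro: continuous_map_real_mult_left)

lemma Cp_carrier_diff: "f \<in> Cp_carrier X \<Longrightarrow> g \<in> Cp_carrier X \<Longrightarrow> f - g \<in> Cp_carrier X"
  by (auto simp add: Cp_carrier_def fun_diff_def intro: continuous_map_diff)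

lemma Cp_carrier_sum: "(\<And>i. i \<in> I \<Longrightarrow> f i \<in> Cp_carrier X) \<Longrightarrow> sum f I \<in> Cp_carrier X"
  by (induction I rule: infinite_finite_induct) (auto simp: Cp_carrier_zero Cp_carrier_add)

lemma Cp_carrier_mult:
  "f \<in> Cp_carrier X \<Longrightarrow> continuous_map X euclideanreal g \<Longrightarrow> (\<lambda>x. f x * g x) \<in> Cp_carrier X"
  by (auto simp add: Cp_carrier_def intro: continuous_map_real_mult)

lemma sum_apply_fun: "(sum f I) x = (\<Sum>i\<in>I. f i x)" for f :: "'i \<Rightarrow> 'a \<Rightarrow> real"
  by (induction I rule: infinite_finite_induct) auto

lemma continuous_map_evaluation: "continuous_map euclidean euclideanreal (\<lambda>f::'a \<Rightarrow> real. f x)"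
  using continuous_map_product_projection[of x UNIV "\<lambda>i. euclideanreal"]
  by (simp add: euclidean_product_topology)

lemma Hausdorff_space_fun: "Hausdorff_space (euclidean :: ('a \<Rightarrow> real) topology)"
  using Hausdorff_space_product_topology[of "\<lambda>i::'a. euclideanreal" UNIV]
  by (simp add: euclidean_product_topology)

lemma open_fun_contains_box:
  fixes U :: "('a \<Rightarrow> real) set"
  assumes "open U" "g \<in> U"
  shows "\<exists>K \<delta>. finite K \<and> \<delta> > 0 \<and> {h. \<forall>x\<in>K. \<bar>h x - g x\<bar> < \<delta>} \<subseteq> U"
proof -
  have "openin (product_topology (\<lambda>i. euclidean) UNIV) U"
    using assms(1) by (simp add: open_fun_def)
  then obtain Y where Y: "g \<in> (\<Pi>\<^sub>E i\<in>UNIV. Y i)" "\<And>i. openin euclidean (Y i)"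
     "finite {i. Y i \<noteq> topspace euclidean}" "(\<Pi>\<^sub>E i\<in>UNIV. Y i) \<subseteq> U"
    using product_topology_open_contains_basis[OF _ assms(2)] by blast
  define K where "K = {i. Y i \<noteq> UNIV}"
  have "finite K" using Y(3) by (simp add: K_def)
  have "\<forall>i. \<exists>d>0. ball (g i) d \<subseteq> Y i"
    using Y(1,2) by (simp add: PiE_iff open_contains_ball)
  then obtain d where d: "\<And>i. d i > 0" "\<And>i. ball (g i) (d i) \<subseteq> Y i" by metis
  define \<delta> where "\<delta> = Min (insert 1 (d ` K))"
  have "\<delta> > 0" using \<open>finite K\<close> d(1) by (simp add: \<delta>_def)
  have "{h. \<forall>x\<in>K. \<bar>h x - g x\<bar> < \<delta>} \<subseteq> (\<Pi>\<^sub>E i\<in>UNIV. Y i)"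
  proof (clarsimp simp: PiE_iff)
    fix h i assume h: "\<forall>x\<in>K. \<bar>h x - g x\<bar> < \<delta>"
    show "h i \<in> Y i"
    proof (cases "i \<in> K")
      case True
      then have "\<delta> \<le> d i" using \<open>finite K\<close> by (simp add: \<delta>_def)
      then have "h i \<in> ball (g i) (d i)" using h True by (auto simp: dist_real_def)
      then show ?thesis using d(2) by blast
    qed (simp add: K_def)
  qed
  with Y(4) \<open>finite K\<close> \<open>\<delta> > 0\<close> show ?thesis by blast
qed

lemma openin_Cp_contains_box:
  assumes "openin (Cp X) U" "g \<in> U"
  shows "\<exists>K \<delta>. finite K \<and> K \<subseteq> topspace X \<and> \<delta> > 0 \<and>
           {h \<in> Cp_carrier X. \<forall>x\<in>K. \<bar>h x - g x\<bar> < \<delta>} \<subseteq> U"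
proof -
  obtain V where V: "open V" "U = Cp_carrier X \<inter> V"
    using assms(1) by (auto simp: Cp_eq_subtopology openin_subtopology)
  obtain K \<delta> where K: "finite K" "\<delta> > 0" "{h. \<forall>x\<in>K. \<bar>h x - g x\<bar> < \<delta>} \<subseteq> V"
    using open_fun_contains_box[OF V(1)] assms(2) V(2) by blast
  have g: "g \<in> Cp_carrier X" using assms(2) V(2) by blast
  have "{h \<in> Cp_carrier X. \<forall>x\<in>K \<inter> topspace X. \<bar>h x - g x\<bar> < \<delta>} \<subseteq> U"
    using K(2,3) g V(2) by (force simp: Cp_carrier_def)
  with K(1,2) show ?thesis by (intro exI[of _ "K \<inter> topspace X"] exI[of _ \<delta>]) auto
qed

lemma openin_Cp_box:
  assumes "finite K"
  shows "openin (Cp X) {h \<in> Cp_carrier X. \<forall>x\<in>K. \<bar>h x - g x\<bar> < \<delta>}"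
proof -
  have "open {h. \<forall>x\<in>K. h (id x) \<in> ball (g x) \<delta>}"
    by (rule product_topology_basis') (use assms in auto)
  moreover have "{h. \<forall>x\<in>K. h (id x) \<in> ball (g x) \<delta>} = {h. \<forall>x\<in>K. \<bar>h x - g x\<bar> < \<delta>}"
    by (auto simp: dist_real_def abs_minus_commute)
  ultimately show ?thesis by (auto simp: Cp_eq_subtopology openin_subtopology)
qed

lemma tychonoff_bump_exists:
  assumes "tychonoff_space X" "finite K" "K \<subseteq> topspace X" "x \<in> topspace X"
  shows "\<exists>e\<in>Cp_carrier X. e x = 1 \<and> (\<forall>y\<in>K-{x}. e y = 0) \<and> (\<forall>y. 0 \<le> e y \<and> e y \<le> 1)"
proof -
  have "t1_space X"
    using assms(1) Hausdorff_imp_t1_space by (auto simp: tychonoff_space_def)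
  then have "closedin X (K - {x})"
    using assms(2,3) by (auto simp: t1_space_closedin_finite)
  then obtain f :: "'a \<Rightarrow> real" where
    f: "continuous_map X (top_of_set {0..1}) f" "f x = 0" "f ` (K-{x}) \<subseteq> {1}"
    using assms(1,4) unfolding tychonoff_space_def completely_regular_space_def by blast
  have fc: "continuous_map X euclideanreal f" and fr: "\<And>y. y \<in> topspace X \<Longrightarrow> f y \<in> {0..1}"
    using f(1) by (auto simp: continuous_map_in_subtopology)
  define e where "e = (\<lambda>y. if y \<in> topspace X then 1 - f y else 0)"
  have "continuous_map X euclideanreal e"
    by (rule continuous_map_eq[of _ _ "\<lambda>y. 1 - f y"]) (auto simp: e_def intro!: continuous_map_diff fc)
  then have "e \<in> Cp_carrier X" by (simp add: Cp_carrier_def e_def)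
  moreover have "e x = 1" using assms(4) f(2) by (simp add: e_def)
  moreover have "\<forall>y\<in>K-{x}. e y = 0" using f(3) assms(3) by (auto simp: e_def)
  moreover have "\<forall>y. 0 \<le> e y \<and> e y \<le> 1" using fr by (auto simp: e_def)
  ultimately show ?thesis by blast
qed

definition bump :: "'a topology \<Rightarrow> 'a set \<Rightarrow> 'a \<Rightarrow> 'a \<Rightarrow> real" where
  "bump X K x = (SOME e. e \<in> Cp_carrier X \<and> e x = 1 \<and> (\<forall>y\<in>K-{x}. e y = 0) \<and> (\<forall>y. 0 \<le> e y \<and> e y \<le> 1))"

context
  fixes X :: "'a topology" and K :: "'a set"
  assumes tychonoff: "tychonoff_space X" and finite: "finite K" and subset: "K \<subseteq> topspace X"
begin

lemma bump:
  assumes "x \<in> topspace X"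
  shows bump_in_Cp_carrier: "bump X K x \<in> Cp_carrier X"
    and bump_self: "bump X K x x = 1"
    and bump_vanishes: "\<And>y. y \<in> K - {x} \<Longrightarrow> bump X K x y = 0"
    and bump_bounds: "\<And>y. 0 \<le> bump X K x y \<and> bump X K x y \<le> 1"
  using someI_ex[OF tychonoff_bump_exists[OF tychonoff finite subset assms, unfolded Bex_def]]
  unfolding bump_def by blast+

lemma bump_in_Cp_unit_ball:
  assumes "x \<in> topspace X"
  shows "bump X K x \<in> Cp_unit_ball X"
proof -
  have "\<bar>bump X K x y\<bar> \<le> 1" for y
    using bump_bounds[OF assms, of y] by (simp add: abs_le_iff)
  then show ?thesis using bump_in_Cp_carrier[OF assms] by (simp add: Cp_unit_ball_def)
qed

lemma sum_bumps_in_Cp_carrier: "(\<Sum>x\<in>K. v x *\<^sub>R bump X K x) \<in> Cp_carrier X"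
  using subset by (intro Cp_carrier_sum Cp_carrier_scaleR bump_in_Cp_carrier) auto

lemma sum_bumps_interpolates:
  assumes "y \<in> K"
  shows "(\<Sum>x\<in>K. v x *\<^sub>R bump X K x) y = v y"
proof -
  have "(\<Sum>x\<in>K. v x *\<^sub>R bump X K x) y = (\<Sum>x\<in>K. v x * bump X K x y)"
    by (simp add: sum_apply_fun scaleR_fun_def)
  also have "\<dots> = v y * bump X K y y"
    using finite assms subset by (subst sum.mono_neutral_right[of K "{y}"]) (auto simp: bump_vanishes)
  finally show ?thesis using assms subset by (auto simp: bump_self)
qed

end

subsection \<open>The dual of \<open>C\<^sub>p(X)\<close>\<close>

context
  fixes \<phi> :: "('a \<Rightarrow> real) \<Rightarrow> real" and X :: "'a topology"
  assumes dual: "\<phi> \<in> dual_space (Cp X)"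
begin

lemma dual_Cp_add: "f \<in> Cp_carrier X \<Longrightarrow> g \<in> Cp_carrier X \<Longrightarrow> \<phi> (f + g) = \<phi> f + \<phi> g"
  using dual by (simp add: dual_space_def topspace_Cp)

lemma dual_Cp_scaleR: "f \<in> Cp_carrier X \<Longrightarrow> \<phi> (c *\<^sub>R f) = c * \<phi> f"
  using dual by (simp add: dual_space_def topspace_Cp)

lemma dual_Cp_zero: "\<phi> 0 = 0"
  using dual_Cp_scaleR[OF Cp_carrier_zero, of 0] by simp

lemma dual_Cp_diff:
  assumes "f \<in> Cp_carrier X" "g \<in> Cp_carrier X"
  shows "\<phi> (f - g) = \<phi> f - \<phi> g"
proof -
  have "\<phi> (f + (-1) *\<^sub>R g) = \<phi> f + (-1) * \<phi> g"
    using assms by (simp only: dual_Cp_add dual_Cp_scaleR Cp_carrier_scaleR)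
  then show ?thesis by simp
qed

lemma dual_Cp_sum: "(\<And>i. i \<in> I \<Longrightarrow> f i \<in> Cp_carrier X) \<Longrightarrow> \<phi> (sum f I) = (\<Sum>i\<in>I. \<phi> (f i))"
proof (induction I rule: infinite_finite_induct)
  case (insert x F)
  have "\<phi> (sum f (insert x F)) = \<phi> (f x + sum f F)" by (simp only: sum.insert[OF insert.hyps])
  also have "\<dots> = \<phi> (f x) + \<phi> (sum f F)"
    using insert.prems by (intro dual_Cp_add Cp_carrier_sum) auto
  also have "\<dots> = (\<Sum>i\<in>insert x F. \<phi> (f i))"
    using insert.IH insert.prems insert.hyps by simp
  finally show ?case .
qed (simp_all add: dual_Cp_zero)

end

lemma dual_space_scaled:
  assumes "\<phi> \<in> dual_space T"
  shows "(\<lambda>f. c * \<phi> f) \<in> dual_space T"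
  using assms by (auto simp: dual_space_def algebra_simps intro: continuous_map_real_mult_left)

definition evaluation :: "'a topology \<Rightarrow> 'a \<Rightarrow> ('a \<Rightarrow> real) \<Rightarrow> real" where
  "evaluation X x f = (if f \<in> Cp_carrier X then f x else 0)"

lemma evaluation_in_dual_space: "evaluation X x \<in> dual_space (Cp X)"
proof -
  have "continuous_map (Cp X) euclideanreal (\<lambda>f. f x)"
    unfolding Cp_eq_subtopology
    by (intro continuous_map_from_subtopology continuous_map_evaluation)
  then have "continuous_map (Cp X) euclideanreal (evaluation X x)"
    by (rule continuous_map_eq) (simp add: evaluation_def topspace_Cp)
  moreover have "evaluation X x (c *\<^sub>R f) = c * evaluation X x f" if "f \<in> Cp_carrier X" for c f
    using Cp_carrier_scaleR[OF that, of c] that by (simp add: evaluation_def scaleR_fun_def)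
  ultimately show ?thesis
    by (auto simp: dual_space_def evaluation_def topspace_Cp Cp_carrier_add)
qed

lemma Cp_zero_nbhd_contains_box:
  assumes "openin (Cp X) U" "0 \<in> U"
  obtains K \<delta> where "finite K" "K \<subseteq> topspace X" "\<delta> > 0"
    "\<And>h. h \<in> Cp_carrier X \<Longrightarrow> (\<forall>x\<in>K. \<bar>h x\<bar> < \<delta>) \<Longrightarrow> h \<in> U"
proof -
  obtain K \<delta> where "finite K" "K \<subseteq> topspace X" "\<delta> > 0"
    "{h \<in> Cp_carrier X. \<forall>x\<in>K. \<bar>h x - 0 x\<bar> < \<delta>} \<subseteq> U"
    using openin_Cp_contains_box[OF assms] by blast
  then show ?thesis by (intro that[of K \<delta>]) auto
qed

text \<open>A functional bounded on a pointwise box around \<open>0\<close> kills every function vanishing on the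
  finitely many points of the box (by scaling), so it only sees the values at these points.\<close>

lemma dual_Cp_eq_sum_bumps:
  assumes tychonoff: "tychonoff_space X" and K: "finite K" "K \<subseteq> topspace X" and "\<delta> > 0"
    and dual: "\<phi> \<in> dual_space (Cp X)"
    and bounded: "\<And>h. h \<in> Cp_carrier X \<Longrightarrow> (\<forall>x\<in>K. \<bar>h x\<bar> < \<delta>) \<Longrightarrow> \<bar>\<phi> h\<bar> \<le> 1"
    and g: "g \<in> Cp_carrier X"
  shows "\<phi> g = (\<Sum>x\<in>K. g x * \<phi> (bump X K x))"
proof -
  have vanishing: "\<phi> h = 0" if h: "h \<in> Cp_carrier X" "\<forall>x\<in>K. h x = 0" for h
  proof (rule ccontr)
    assume "\<phi> h \<noteq> 0"
    define c where "c = 2 / \<bar>\<phi> h\<bar>"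
    have "\<bar>\<phi> (c *\<^sub>R h)\<bar> \<le> 1"
      using h \<open>\<delta> > 0\<close> by (intro bounded Cp_carrier_scaleR) (auto simp: scaleR_fun_def)
    moreover have "\<bar>\<phi> (c *\<^sub>R h)\<bar> = 2"
      using \<open>\<phi> h \<noteq> 0\<close> dual_Cp_scaleR[OF dual h(1)] by (simp add: c_def abs_mult)
    ultimately show False by simp
  qed
  have bumps: "\<And>x. x \<in> K \<Longrightarrow> bump X K x \<in> Cp_carrier X"
    using bump_in_Cp_carrier[OF tychonoff K] K(2) by blast
  define s where "s = (\<Sum>x\<in>K. g x *\<^sub>R bump X K x)"
  have s: "s \<in> Cp_carrier X" "\<And>y. y \<in> K \<Longrightarrow> s y = g y"
    unfolding s_def by (rule sum_bumps_in_Cp_carrier[OF tychonoff K], rule sum_bumps_interpolates[OF tychonoff K])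
  have "\<phi> (g - s) = 0"
    using s g by (intro vanishing Cp_carrier_diff) auto
  then have "\<phi> g = \<phi> s" using dual_Cp_diff[OF dual g s(1)] by simp
  also have "\<dots> = (\<Sum>x\<in>K. \<phi> (g x *\<^sub>R bump X K x))"
    unfolding s_def using bumps by (intro dual_Cp_sum[OF dual] Cp_carrier_scaleR)
  also have "\<dots> = (\<Sum>x\<in>K. g x * \<phi> (bump X K x))"
    using bumps by (intro sum.cong refl dual_Cp_scaleR[OF dual])
  finally show ?thesis .
qed

definition point_representation ::
    "'a topology \<Rightarrow> (('a \<Rightarrow> real) \<Rightarrow> real) \<Rightarrow> 'a set \<Rightarrow> ('a \<Rightarrow> real) \<Rightarrow> bool" where
  "point_representation X \<phi> K c \<longleftrightarrow> finite K \<and> K \<subseteq> topspace X \<and> (\<forall>x\<in>K. c x \<noteq> 0) \<and>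
     (\<forall>g\<in>Cp_carrier X. \<phi> g = (\<Sum>x\<in>K. c x * g x))"

lemma dual_Cp_point_representation:
  assumes tychonoff: "tychonoff_space X" and dual: "\<phi> \<in> dual_space (Cp X)"
  shows "\<exists>K c. point_representation X \<phi> K c"
proof -
  have "openin (Cp X) {h \<in> topspace (Cp X). \<phi> h \<in> {-1<..<1}}"
    using dual by (intro openin_continuous_map_preimage[where Y = euclideanreal])
      (simp_all add: dual_space_def)
  moreover have "0 \<in> {h \<in> topspace (Cp X). \<phi> h \<in> {-1<..<1}}"
    using dual_Cp_zero[OF dual] Cp_carrier_zero by (simp add: topspace_Cp)
  ultimately obtain K \<delta> where K: "finite K" "K \<subseteq> topspace X" "\<delta> > 0"
    and box: "\<And>h. h \<in> Cp_carrier X \<Longrightarrow> (\<forall>x\<in>K. \<bar>h x\<bar> < \<delta>) \<Longrightarrow>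
                h \<in> {h \<in> topspace (Cp X). \<phi> h \<in> {-1<..<1}}"
    by (rule Cp_zero_nbhd_contains_box) blast
  have bounded: "\<bar>\<phi> h\<bar> \<le> 1" if "h \<in> Cp_carrier X" "\<forall>x\<in>K. \<bar>h x\<bar> < \<delta>" for h
    using box[OF that] by (auto simp: abs_le_iff)
  define c where "c x = \<phi> (bump X K x)" for x
  define K' where "K' = {x\<in>K. c x \<noteq> 0}"
  have "\<phi> g = (\<Sum>x\<in>K'. c x * g x)" if "g \<in> Cp_carrier X" for g
  proof -
    have "\<phi> g = (\<Sum>x\<in>K. c x * g x)"
      using dual_Cp_eq_sum_bumps[OF tychonoff K dual bounded that] by (simp add: c_def mult.commute)
    also have "\<dots> = (\<Sum>x\<in>K'. c x * g x)"
      using K(1) by (intro sum.mono_neutral_right) (auto simp: K'_def)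
    finally show ?thesis .
  qed
  then have "point_representation X \<phi> K' c"
    using K by (auto simp: point_representation_def K'_def)
  then show ?thesis by blast
qed

subsection \<open>Sequence spaces\<close>

lemma summable_powr_imp_tendsto_zero:
  fixes a :: "nat \<Rightarrow> real"
  assumes s: "summable (\<lambda>n. \<bar>a n\<bar> powr r)" and r: "r > 0"
  shows "a \<longlonglongrightarrow> 0"
proof -
  have "(\<lambda>n. (\<bar>a n\<bar> powr r) powr (1/r)) \<longlonglongrightarrow> 0 powr (1/r)"
    by (rule tendsto_powr'[OF summable_LIMSEQ_zero[OF s] tendsto_const]) (use r in auto)
  moreover have "(\<lambda>n. (\<bar>a n\<bar> powr r) powr (1/r)) = (\<lambda>n. \<bar>a n\<bar>)"
    using r by (simp add: powr_powr)
  ultimately show ?thesis using r by (simp add: tendsto_rabs_zero_iff)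
qed

lemma ereal_finite_ge_one:
  assumes "1 \<le> p" "p \<noteq> \<infinity>"
  shows "p = ereal (real_of_ereal p)" "real_of_ereal p \<ge> 1"
  using assms by (cases p; auto)+

lemma in_lp_mono:
  assumes "1 \<le> p" "p \<le> q" "in_lp p a"
  shows "in_lp q a"
proof (cases "p = \<infinity>")
  case True
  then show ?thesis using assms(2,3) by (simp add: in_lp_def)
next
  case p_finite: False
  define p' where "p' = real_of_ereal p"
  have p': "p = ereal p'" "p' \<ge> 1"
    using ereal_finite_ge_one[OF assms(1) p_finite] by (simp_all add: p'_def)
  have s: "summable (\<lambda>n. \<bar>a n\<bar> powr p')" using assms(3) p_finite by (simp add: in_lp_def p'_def)
  have a: "a \<longlonglongrightarrow> 0" using summable_powr_imp_tendsto_zero[OF s] p' by simp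
  show ?thesis
  proof (cases "q = \<infinity>")
    case True then show ?thesis using a by (simp add: in_lp_def)
  next
    case q_finite: False
    define q' where "q' = real_of_ereal q"
    have "q = ereal q'"
      using ereal_finite_ge_one[OF order_trans[OF assms(1,2)] q_finite] by (simp add: q'_def)
    then have "p' \<le> q'" using assms(2) p' by simp
    have "eventually (\<lambda>n. \<bar>a n\<bar> < 1) sequentially"
      using order_tendstoD(2)[OF tendsto_rabs_zero[OF a]] by simp
    then have "eventually (\<lambda>n. norm (\<bar>a n\<bar> powr q') \<le> \<bar>a n\<bar> powr p') sequentially"
      by eventually_elim (use \<open>p' \<le> q'\<close> in \<open>auto intro!: powr_mono'\<close>)
    then have "summable (\<lambda>n. \<bar>a n\<bar> powr q')" using s by (rule summable_comparison_test_ev)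
    then show ?thesis using q_finite by (simp add: in_lp_def q'_def)
  qed
qed

lemma powr_add_le:
  fixes u v r :: real
  assumes "r \<ge> 0"
  shows "(\<bar>u\<bar> + \<bar>v\<bar>) powr r \<le> 2 powr r * (\<bar>u\<bar> powr r + \<bar>v\<bar> powr r)"
proof -
  define m where "m = max \<bar>u\<bar> \<bar>v\<bar>"
  have "(\<bar>u\<bar> + \<bar>v\<bar>) powr r \<le> (2 * m) powr r"
    by (rule powr_mono2) (use assms in \<open>auto simp: m_def\<close>)
  also have "\<dots> = 2 powr r * m powr r" by (simp add: powr_mult m_def)
  also have "m powr r \<le> \<bar>u\<bar> powr r + \<bar>v\<bar> powr r" by (simp add: m_def max_def)
  then have "2 powr r * m powr r \<le> 2 powr r * (\<bar>u\<bar> powr r + \<bar>v\<bar> powr r)"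
    by (intro mult_left_mono) auto
  finally show ?thesis .
qed

lemma in_lp_abs_add:
  assumes "1 \<le> q" "in_lp q u" "in_lp q v"
  shows "in_lp q (\<lambda>n. \<bar>u n\<bar> + \<bar>v n\<bar>)"
proof (cases "q = \<infinity>")
  case True
  then have "u \<longlonglongrightarrow> 0" "v \<longlonglongrightarrow> 0" using assms by (auto simp: in_lp_def)
  then have "(\<lambda>n. \<bar>u n\<bar> + \<bar>v n\<bar>) \<longlonglongrightarrow> 0 + 0"
    by (intro tendsto_add tendsto_rabs_zero)
  then show ?thesis using True by (simp add: in_lp_def)
next
  case q_finite: False
  define q' where "q' = real_of_ereal q"
  have "q' \<ge> 1" using ereal_finite_ge_one[OF assms(1) q_finite] by (simp add: q'_def)
  have "summable (\<lambda>n. \<bar>u n\<bar> powr q')" "summable (\<lambda>n. \<bar>v n\<bar> powr q')"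
    using assms q_finite by (auto simp: in_lp_def q'_def)
  then have "summable (\<lambda>n. 2 powr q' * (\<bar>u n\<bar> powr q' + \<bar>v n\<bar> powr q'))"
    by (intro summable_mult summable_add)
  moreover have "norm (\<bar>\<bar>u n\<bar> + \<bar>v n\<bar>\<bar> powr q') \<le> 2 powr q' * (\<bar>u n\<bar> powr q' + \<bar>v n\<bar> powr q')" for n
    using powr_add_le[of q' "u n" "v n"] \<open>q' \<ge> 1\<close> by simp
  ultimately have "summable (\<lambda>n. \<bar>\<bar>u n\<bar> + \<bar>v n\<bar>\<bar> powr q')"
    by (rule summable_comparison_test')
  then show ?thesis using q_finite by (simp add: in_lp_def q'_def)
qed

lemma in_lp_sum_abs:
  assumes "finite K" "1 \<le> q" "\<And>x. x \<in> K \<Longrightarrow> in_lp q (\<lambda>n. a n x)"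
  shows "in_lp q (\<lambda>n. \<Sum>x\<in>K. \<bar>a n x\<bar>)"
  using assms(1,3)
proof (induction K rule: finite_induct)
  case empty then show ?case by (simp add: in_lp_def)
next
  case (insert x F)
  have "in_lp q (\<lambda>n. \<bar>a n x\<bar> + \<bar>\<Sum>y\<in>F. \<bar>a n y\<bar>\<bar>)"
    using insert by (intro in_lp_abs_add[OF assms(2)]) auto
  moreover have "\<bar>\<Sum>y\<in>F. \<bar>a n y\<bar>\<bar> = (\<Sum>y\<in>F. \<bar>a n y\<bar>)" for n
    by (intro abs_of_nonneg sum_nonneg) auto
  ultimately show ?case using insert.hyps by simp
qed

lemma in_lq_ereal_dominated:
  assumes "1 \<le> q" "in_lp q b" "\<And>n. 0 \<le> s n" "\<And>n. s n \<le> ereal (b n)"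
  shows "in_lq_ereal q s"
proof (cases "q = \<infinity>")
  case True
  then have b: "(\<lambda>n. ereal (b n)) \<longlonglongrightarrow> 0"
    using assms(2) tendsto_ereal[of b 0] by (simp add: in_lp_def zero_ereal_def)
  have "s \<longlonglongrightarrow> 0"
    by (rule tendsto_sandwich[of "\<lambda>n. 0" _ _ "\<lambda>n. ereal (b n)"]) (use assms(3,4) b in auto)
  then show ?thesis using True by (simp add: in_lq_ereal_def)
next
  case q_finite: False
  define q' where "q' = real_of_ereal q"
  have "q' \<ge> 1" using ereal_finite_ge_one[OF assms(1) q_finite] by (simp add: q'_def)
  have finite: "s n \<noteq> \<infinity>" and real: "0 \<le> real_of_ereal (s n) \<and> real_of_ereal (s n) \<le> b n" for n
    using assms(3,4)[of n] by (cases "s n"; auto)+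
  have "norm (real_of_ereal (s n) powr q') \<le> \<bar>b n\<bar> powr q'" for n
    using real[of n] \<open>q' \<ge> 1\<close> by (auto intro!: powr_mono2)
  moreover have "summable (\<lambda>n. \<bar>b n\<bar> powr q')"
    using assms(2) q_finite by (simp add: in_lp_def q'_def)
  ultimately have "summable (\<lambda>n. real_of_ereal (s n) powr q')"
    by (rule summable_comparison_test'[rotated])
  then show ?thesis using q_finite finite by (simp add: in_lq_ereal_def q'_def)
qed

lemma in_lp_geometric:
  assumes "1 \<le> p"
  shows "in_lp p (\<lambda>n. (1/2)^n * c)"
proof (cases "p = \<infinity>")
  case True
  have "(\<lambda>n. (1/2::real)^n * c) \<longlonglongrightarrow> 0"
    by (intro tendsto_mult_left_zero LIMSEQ_realpow_zero) auto
  then show ?thesis using True by (simp add: in_lp_def)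
next
  case p_finite: False
  define p' where "p' = real_of_ereal p"
  have "p' \<ge> 1" using ereal_finite_ge_one[OF assms p_finite] by (simp add: p'_def)
  then have "(1/2::real) powr p' \<le> 1/2" by (intro powr_le_one_le) auto
  then have "summable (\<lambda>n. ((1/2::real) powr p')^n * \<bar>c\<bar> powr p')"
    by (intro summable_mult2 summable_geometric) simp
  moreover have "\<bar>(1/2)^n * c\<bar> powr p' = ((1/2::real) powr p')^n * \<bar>c\<bar> powr p'" for n
  proof -
    have "((1/2::real)^n) powr p' = (1/2::real) powr (real n * p')"
      by (simp add: powr_realpow[symmetric] powr_powr)
    also have "\<dots> = ((1/2::real) powr p')^n"
      by (simp add: powr_power)
    finally show ?thesis by (simp add: abs_mult powr_mult)
  qed
  ultimately show ?thesis using p_finite by (simp add: in_lp_def p'_def)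
qed

lemma not_in_lq_ereal_infinity: "\<not> in_lq_ereal q (\<lambda>n. \<infinity>)"
proof
  assume lq: "in_lq_ereal q (\<lambda>n. \<infinity>)"
  show False
  proof (cases "q = \<infinity>")
    case True
    then have "(\<lambda>n. \<infinity>::ereal) \<longlonglongrightarrow> 0" using lq by (simp add: in_lq_ereal_def)
    then show False using LIMSEQ_unique tendsto_const by fastforce
  qed (use lq in \<open>simp add: in_lq_ereal_def\<close>)
qed

lemma norm_on_nonneg: "0 \<le> norm_on A \<phi>"
  unfolding norm_on_def by (rule SUP_upper2[of 0]) auto

subsection \<open>\<open>(p,q)\<close>-\<open>\<E>\<close>-limited subsets of \<open>C\<^sub>p(X)\<close>\<close>

lemma pq_E_limited_subset_Cp_carrier: "pq_E_limited p q (Cp X) A \<Longrightarrow> A \<subseteq> Cp_carrier X"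
  by (simp add: pq_E_limited_def topspace_Cp)

lemma geometric_evaluations_weak_star_summable:
  assumes "1 \<le> p"
  shows "weak_star_summable p (Cp X) (\<lambda>n f. (1/2)^n * evaluation X x f)"
  unfolding weak_star_summable_def
proof (intro conjI allI ballI)
  show "(\<lambda>f. (1/2)^n * evaluation X x f) \<in> dual_space (Cp X)" for n :: nat
    by (intro dual_space_scaled evaluation_in_dual_space)
  show "in_lp p (\<lambda>n. (1/2)^n * evaluation X x g)" for g
    by (rule in_lp_geometric[OF assms])
qed

lemma geometric_evaluations_equicontinuous:
  "equicontinuous_set (Cp X) (range (\<lambda>n f. (1/2)^n * evaluation X x f))"
  unfolding equicontinuous_set_def
proof (intro allI impI)
  fix \<epsilon> :: real assume "\<epsilon> > 0"
  define U where "U = {h \<in> Cp_carrier X. \<forall>y\<in>{x}. \<bar>h y - 0 y\<bar> < \<epsilon>}"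
  have "\<bar>(1/2)^n * evaluation X x h\<bar> \<le> \<epsilon>" if "h \<in> U" for n :: nat and h
  proof -
    have "\<bar>(1/2)^n * evaluation X x h\<bar> = (1/2)^n * \<bar>h x\<bar>"
      using that by (simp add: U_def evaluation_def abs_mult)
    also have "\<dots> \<le> \<bar>h x\<bar>" by (intro mult_left_le_one_le) (auto simp: power_le_one)
    finally show ?thesis using that by (simp add: U_def)
  qed
  moreover have "openin (Cp X) U" unfolding U_def by (rule openin_Cp_box) simp
  moreover have "0 \<in> U" using \<open>\<epsilon> > 0\<close> Cp_carrier_zero by (simp add: U_def)
  ultimately show "\<exists>U. openin (Cp X) U \<and> 0 \<in> U \<and>
      (\<forall>\<psi>\<in>range (\<lambda>n f. (1/2)^n * evaluation X x f). \<forall>h\<in>U. \<bar>\<psi> h\<bar> \<le> \<epsilon>)"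
    by blast
qed

text \<open>If \<open>A\<close> were unbounded at \<open>x\<close>, every term of the test sequence \<open>2\<^sup>-\<^sup>n \<delta>\<^sub>x\<close> would
  have infinite norm on \<open>A\<close>.\<close>

lemma pq_E_limited_pointwise_bounded:
  assumes p: "1 \<le> p" and A: "pq_E_limited p q (Cp X) A" and x: "x \<in> topspace X"
  shows "\<exists>M. \<forall>f\<in>A. \<bar>f x\<bar> \<le> M"
proof (rule ccontr)
  assume unbounded: "\<not> ?thesis"
  define \<phi> where "\<phi> = (\<lambda>(n::nat) f. (1/2)^n * evaluation X x f)"
  have "in_lq_ereal q (\<lambda>n. norm_on A (\<phi> n))"
    using A geometric_evaluations_weak_star_summable[OF p, of X x] geometric_evaluations_equicontinuous[of X x]
    unfolding pq_E_limited_def \<phi>_def by blast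
  moreover have "norm_on A (\<phi> n) = \<infinity>" for n
    unfolding norm_on_def
  proof (rule SUP_PInfty)
    fix m :: nat
    obtain f where f: "f \<in> A" "\<bar>f x\<bar> > real m * 2^n" using unbounded by (meson not_le)
    have "real m = (1/2::real)^n * (real m * 2^n)" by (simp add: power_one_over field_simps)
    also have "\<dots> \<le> \<bar>\<phi> n f\<bar>"
      using f pq_E_limited_subset_Cp_carrier[OF A] by (auto simp: \<phi>_def evaluation_def abs_mult)
    finally show "\<exists>f\<in>A \<union> {0}. ereal (real m) \<le> ereal \<bar>\<phi> n f\<bar>" using f(1) by auto
  qed
  ultimately show False using not_in_lq_ereal_infinity by simp
qed

lemma equicontinuous_Cp_bounded_on_box:
  assumes "equicontinuous_set (Cp X) (range \<phi>)"
  obtains K \<delta> where "finite K" "K \<subseteq> topspace X" "\<delta> > 0"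
    "\<And>n h. h \<in> Cp_carrier X \<Longrightarrow> (\<forall>x\<in>K. \<bar>h x\<bar> < \<delta>) \<Longrightarrow> \<bar>\<phi> n h\<bar> \<le> 1"
proof -
  obtain U where U_open: "openin (Cp X) U" and "0 \<in> U" and U: "\<forall>\<psi>\<in>range \<phi>. \<forall>h\<in>U. \<bar>\<psi> h\<bar> \<le> 1"
    using assms unfolding equicontinuous_set_def by (meson zero_less_one)
  obtain K \<delta> where K: "finite K" "K \<subseteq> topspace X" "\<delta> > 0"
    and box: "\<And>h. h \<in> Cp_carrier X \<Longrightarrow> (\<forall>x\<in>K. \<bar>h x\<bar> < \<delta>) \<Longrightarrow> h \<in> U"
    using U_open \<open>0 \<in> U\<close> by (rule Cp_zero_nbhd_contains_box) blast
  show thesis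
    by (rule that[OF K]) (use U box in blast)
qed

text \<open>Each term of the sequence is a combination of the evaluations at the points of a common box,
  with \<open>p\<close>-summable coefficient sequences; on the unit ball its norm is at most the sum of their
  absolute values.\<close>

lemma Cp_unit_ball_pq_E_limited:
  assumes tychonoff: "tychonoff_space X" and pq: "1 \<le> p" "p \<le> q"
  shows "pq_E_limited p q (Cp X) (Cp_unit_ball X)"
  unfolding pq_E_limited_def
proof (intro conjI allI impI)
  have "0 \<in> Cp_unit_ball X" by (simp add: Cp_unit_ball_def Cp_carrier_zero)
  then show "Cp_unit_ball X \<noteq> {}" "Cp_unit_ball X \<subseteq> topspace (Cp X)"
    by (auto simp: Cp_unit_ball_def topspace_Cp)
next
  fix \<phi> assume \<phi>: "weak_star_summable p (Cp X) \<phi> \<and> equicontinuous_set (Cp X) (range \<phi>)"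
  then have dual: "\<And>n. \<phi> n \<in> dual_space (Cp X)"
    and summable: "\<And>g. g \<in> Cp_carrier X \<Longrightarrow> in_lp p (\<lambda>n. \<phi> n g)"
    by (auto simp: weak_star_summable_def topspace_Cp)
  obtain K \<delta> where K: "finite K" "K \<subseteq> topspace X" "\<delta> > 0"
    and bounded: "\<And>n h. h \<in> Cp_carrier X \<Longrightarrow> (\<forall>x\<in>K. \<bar>h x\<bar> < \<delta>) \<Longrightarrow> \<bar>\<phi> n h\<bar> \<le> 1"
    using equicontinuous_Cp_bounded_on_box[OF conjunct2[OF \<phi>]] by blast
  define b where "b n = (\<Sum>x\<in>K. \<bar>\<phi> n (bump X K x)\<bar>)" for n
  have lp: "in_lp q b"
    unfolding b_def using K(1) order_trans[OF pq]
  proof (rule in_lp_sum_abs)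
    fix x assume "x \<in> K"
    then show "in_lp q (\<lambda>n. \<phi> n (bump X K x))"
      using K(2) by (intro in_lp_mono[OF pq] summable bump_in_Cp_carrier[OF tychonoff K(1,2)]) auto
  qed
  have norm: "norm_on (Cp_unit_ball X) (\<phi> n) \<le> ereal (b n)" for n
    unfolding norm_on_def
  proof (rule SUP_least)
    fix f assume "f \<in> Cp_unit_ball X \<union> {0}"
    then have f: "f \<in> Cp_carrier X" "\<And>y. \<bar>f y\<bar> \<le> 1"
      by (auto simp: Cp_unit_ball_def Cp_carrier_zero)
    have "\<bar>\<phi> n f\<bar> = \<bar>\<Sum>x\<in>K. f x * \<phi> n (bump X K x)\<bar>"
      using dual_Cp_eq_sum_bumps[OF tychonoff K dual bounded f(1)] by simp
    also have "\<dots> \<le> (\<Sum>x\<in>K. \<bar>f x * \<phi> n (bump X K x)\<bar>)" by (rule sum_abs)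
    also have "\<dots> \<le> b n"
      unfolding b_def abs_mult using f(2) by (intro sum_mono mult_left_le_one_le) auto
    finally show "ereal \<bar>\<phi> n f\<bar> \<le> ereal (b n)" by simp
  qed
  show "in_lq_ereal q (\<lambda>n. norm_on (Cp_unit_ball X) (\<phi> n))"
    by (rule in_lq_ereal_dominated[OF order_trans[OF pq] lp norm_on_nonneg norm])
qed

text \<open>Rounding the values on \<open>S\<close> to the grid \<open>(\<delta>/2)\<int>\<close> leaves finitely many possibilities,
  each realised by a combination of bumps.\<close>

lemma pointwise_bounded_finite_cover:
  assumes tychonoff: "tychonoff_space X" and S: "finite S" "S \<subseteq> topspace X" and "\<delta> > 0"
    and A: "A \<subseteq> Cp_carrier X" and bounded: "\<forall>x\<in>S. \<exists>M. \<forall>f\<in>A. \<bar>f x\<bar> \<le> M"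
  shows "\<exists>F. finite F \<and> F \<subseteq> Cp_carrier X \<and>
           A \<subseteq> (\<Union>f\<in>F. (\<lambda>u. f + u) ` {u \<in> Cp_carrier X. \<forall>x\<in>S. \<bar>u x\<bar> < \<delta>})"
proof -
  obtain M where M: "\<And>x f. x \<in> S \<Longrightarrow> f \<in> A \<Longrightarrow> \<bar>f x\<bar> \<le> M x"
    using bounded by metis
  define h where "h = \<delta> / 2"
  have "h > 0" using \<open>\<delta> > 0\<close> by (simp add: h_def)
  define w where "w f = (\<lambda>x\<in>S. \<lfloor>f x / h\<rfloor>)" for f :: "'a \<Rightarrow> real"
  define G where "G w = (\<Sum>x\<in>S. (h * of_int (w x)) *\<^sub>R bump X S x)" for w :: "'a \<Rightarrow> int"
  have G: "G w \<in> Cp_carrier X" "\<And>y. y \<in> S \<Longrightarrow> G w y = h * of_int (w y)" for w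
    unfolding G_def by (rule sum_bumps_in_Cp_carrier[OF tychonoff S], rule sum_bumps_interpolates[OF tychonoff S])
  have "w ` A \<subseteq> PiE S (\<lambda>x. {\<lfloor>- M x / h\<rfloor>..\<lfloor>M x / h\<rfloor>})"
  proof -
    have "- M x / h \<le> f x / h" "f x / h \<le> M x / h" if "x \<in> S" "f \<in> A" for x f
      using M[OF that] \<open>h > 0\<close> by (auto simp: abs_le_iff field_simps)
    then show ?thesis by (auto simp: w_def PiE_iff intro!: floor_mono)
  qed
  then have "finite (w ` A)"
    by (rule finite_subset) (use S(1) in \<open>auto intro!: finite_PiE\<close>)
  then have "finite (G ` w ` A)" by simp
  moreover have "f \<in> (\<lambda>u. G (w f) + u) ` {u \<in> Cp_carrier X. \<forall>x\<in>S. \<bar>u x\<bar> < \<delta>}" if "f \<in> A" for f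
  proof
    show "f = G (w f) + (f - G (w f))" by simp
    have "\<bar>f x - h * of_int \<lfloor>f x / h\<rfloor>\<bar> < \<delta>" for x
    proof -
      have "of_int \<lfloor>f x / h\<rfloor> \<le> f x / h" "f x / h < of_int \<lfloor>f x / h\<rfloor> + 1" by linarith+
      then have "h * of_int \<lfloor>f x / h\<rfloor> \<le> h * (f x / h)" "h * (f x / h) < h * (of_int \<lfloor>f x / h\<rfloor> + 1)"
        using \<open>h > 0\<close> by (intro mult_left_mono mult_strict_left_mono; simp)+
      then have "h * of_int \<lfloor>f x / h\<rfloor> \<le> f x" "f x < h * of_int \<lfloor>f x / h\<rfloor> + h"
        using \<open>h > 0\<close> by (simp_all add: algebra_simps)
      then show ?thesis by (simp add: h_def)
    qed
    then show "f - G (w f) \<in> {u \<in> Cp_carrier X. \<forall>x\<in>S. \<bar>u x\<bar> < \<delta>}"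
      using G that A by (auto simp: w_def intro: Cp_carrier_diff)
  qed
  ultimately show ?thesis using G(1) by (intro exI[of _ "G ` w ` A"]) auto
qed

lemma pq_E_limited_finite_cover:
  assumes "tychonoff_space X" "1 \<le> p" and A: "pq_E_limited p q (Cp X) A"
    and "finite S" "S \<subseteq> topspace X" "\<delta> > 0"
  shows "\<exists>F. finite F \<and> F \<subseteq> topspace (Cp X) \<and>
           A \<subseteq> (\<Union>f\<in>F. (\<lambda>u. f + u) ` {u \<in> Cp_carrier X. \<forall>x\<in>S. \<bar>u x\<bar> < \<delta>})"
proof -
  have "\<forall>x\<in>S. \<exists>M. \<forall>f\<in>A. \<bar>f x\<bar> \<le> M"
    using pq_E_limited_pointwise_bounded[OF assms(2) A] assms(5) by blast
  then show ?thesis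
    using pointwise_bounded_finite_cover[OF assms(1,4,5,6) pq_E_limited_subset_Cp_carrier[OF A]]
    by (simp add: topspace_Cp)
qed

lemma prEGP_Cp:
  assumes "tychonoff_space X" "1 \<le> p"
  shows "prEGP p q (Cp X)"
  unfolding prEGP_def precompact_def
proof (intro allI impI)
  fix A U assume A: "pq_E_limited p q (Cp X) A" and U: "openin (Cp X) U \<and> 0 \<in> U"
  obtain K \<delta> where K: "finite K" "K \<subseteq> topspace X" "\<delta> > 0"
    and box: "\<And>h. h \<in> Cp_carrier X \<Longrightarrow> (\<forall>x\<in>K. \<bar>h x\<bar> < \<delta>) \<Longrightarrow> h \<in> U"
    using U by (meson Cp_zero_nbhd_contains_box)
  obtain F where "finite F" "F \<subseteq> topspace (Cp X)"
    and cover: "A \<subseteq> (\<Union>f\<in>F. (\<lambda>u. f + u) ` {u \<in> Cp_carrier X. \<forall>x\<in>K. \<bar>u x\<bar> < \<delta>})"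
    using pq_E_limited_finite_cover[OF assms A K] by blast
  moreover have "(\<Union>f\<in>F. (\<lambda>u. f + u) ` {u \<in> Cp_carrier X. \<forall>x\<in>K. \<bar>u x\<bar> < \<delta>})
      \<subseteq> (\<Union>f\<in>F. (\<lambda>u. f + u) ` U)"
    by (intro UN_mono image_mono order_refl) (auto intro: box)
  ultimately show "\<exists>F. finite F \<and> F \<subseteq> topspace (Cp X) \<and> A \<subseteq> (\<Union>f\<in>F. (\<lambda>u. f + u) ` U)"
    by (meson order_trans)
qed

lemma pq_limited_imp_pq_E_limited: "pq_limited p q T A \<Longrightarrow> pq_E_limited p q T A"
  by (simp add: pq_limited_def pq_E_limited_def)

lemma prGP_Cp:
  assumes "tychonoff_space X" "1 \<le> p"
  shows "prGP p q (Cp X)"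
  using prEGP_Cp[OF assms, of q] pq_limited_imp_pq_E_limited unfolding prGP_def prEGP_def by blast

subsection \<open>Relative compactness: discrete spaces\<close>

lemma Cp_closure_of_eq:
  "A \<subseteq> Cp_carrier X \<Longrightarrow> Cp X closure_of A = Cp_carrier X \<inter> euclidean closure_of A"
  unfolding Cp_eq_subtopology closure_of_subtopology by (simp add: Int_absorb1)

lemma compactin_fun_PiE:
  "(\<And>x. compact (B x)) \<Longrightarrow> compactin euclidean (\<Pi>\<^sub>E x\<in>UNIV. B x :: real set)"
  using compactin_PiE[of "\<lambda>x. euclideanreal" UNIV B] by (simp add: euclidean_product_topology)

lemma closedin_fun_PiE:
  "(\<And>x. closed (B x)) \<Longrightarrow> closedin euclidean (\<Pi>\<^sub>E x\<in>UNIV. B x :: real set)"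
  using closedin_product_topology[of "\<lambda>x. euclideanreal" UNIV B] by (simp add: euclidean_product_topology)

lemma Cp_carrier_discrete:
  assumes "X = discrete_topology (topspace X)"
  shows "Cp_carrier X = {f. \<forall>x. x \<notin> topspace X \<longrightarrow> f x = 0}"
proof -
  have "continuous_map X euclideanreal f" for f :: "'a \<Rightarrow> real" by (subst assms) simp
  then show ?thesis by (simp add: Cp_carrier_def)
qed

text \<open>For discrete \<open>X\<close> every function is continuous, so a pointwise bounded set lies in a
  product of compact intervals contained in \<open>C\<^sub>p(X)\<close>.\<close>

lemma EGP_Cp_discrete:
  assumes "1 \<le> p" and discrete: "X = discrete_topology (topspace X)"
  shows "EGP p q (Cp X)"
  unfolding EGP_def relatively_compact_def
proof (intro allI impI)
  fix A assume A: "pq_E_limited p q (Cp X) A"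
  then have A_carrier: "A \<subseteq> Cp_carrier X" by (rule pq_E_limited_subset_Cp_carrier)
  obtain M where M: "\<And>x f. x \<in> topspace X \<Longrightarrow> f \<in> A \<Longrightarrow> \<bar>f x\<bar> \<le> M x"
    using pq_E_limited_pointwise_bounded[OF assms(1) A] by metis
  define P where "P = (\<Pi>\<^sub>E x\<in>UNIV. if x \<in> topspace X then {-\<bar>M x\<bar>..\<bar>M x\<bar>} else {0::real})"
  have "compactin euclidean P" "closedin euclidean P"
    unfolding P_def by (rule compactin_fun_PiE closedin_fun_PiE, simp)+
  have P_carrier: "P \<subseteq> Cp_carrier X"
    unfolding Cp_carrier_discrete[OF discrete] P_def by (auto simp: PiE_iff) (metis singletonD)
  have "A \<subseteq> P"
  proof
    fix f assume f: "f \<in> A"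
    have "f x \<in> (if x \<in> topspace X then {-\<bar>M x\<bar>..\<bar>M x\<bar>} else {0})" for x
    proof (cases "x \<in> topspace X")
      case True
      then show ?thesis using M[OF True f] by (simp add: abs_le_iff)
    next
      case False
      then show ?thesis using f A_carrier by (auto simp: Cp_carrier_def)
    qed
    then show "f \<in> P" by (simp add: P_def PiE_iff)
  qed
  then have closure: "euclidean closure_of A \<subseteq> P"
    using \<open>closedin euclidean P\<close> by (rule closure_of_minimal)
  then have "compactin euclidean (euclidean closure_of A)"
    by (rule closed_compactin[OF \<open>compactin euclidean P\<close>]) simp_all
  moreover have "Cp X closure_of A = euclidean closure_of A"
    using Cp_closure_of_eq[OF A_carrier] closure P_carrier by blast
  ultimately show "compactin (Cp X) (Cp X closure_of A)"
    unfolding Cp_eq_subtopology compactin_subtopology using closure P_carrier by auto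
qed

lemma relatively_compact_Cp_closure_subset:
  assumes "relatively_compact (Cp X) A" and A: "A \<subseteq> Cp_carrier X"
  shows "euclidean closure_of A \<subseteq> Cp_carrier X"
proof -
  have "compactin euclidean (Cp X closure_of A)"
    using assms(1) unfolding relatively_compact_def Cp_eq_subtopology compactin_subtopology by blast
  then have "closedin euclidean (Cp X closure_of A)"
    by (rule compactin_imp_closedin[OF Hausdorff_space_fun])
  moreover have "A \<subseteq> Cp X closure_of A"
    using A by (intro closure_of_subset) (simp add: topspace_Cp)
  ultimately have "euclidean closure_of A \<subseteq> Cp X closure_of A"
    by (rule closure_of_minimal[rotated])
  then show ?thesis using Cp_closure_of_eq[OF A] by blast
qed

lemma point_indicator_in_closure_Cp_unit_ball:
  assumes tychonoff: "tychonoff_space X" and x0: "x0 \<in> topspace X"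
  shows "(\<lambda>y. if y = x0 then 1 else 0 :: real) \<in> euclidean closure_of Cp_unit_ball X"
    (is "?ind \<in> _")
  unfolding in_closure_of
proof (intro conjI allI impI)
  fix T assume "?ind \<in> T \<and> openin euclidean T"
  then obtain K \<delta> where K: "finite K" "\<delta> > 0" "{h. \<forall>x\<in>K. \<bar>h x - ?ind x\<bar> < \<delta>} \<subseteq> T"
    using open_fun_contains_box[of T ?ind] by auto
  define K' where "K' = insert x0 (K \<inter> topspace X)"
  have K': "finite K'" "K' \<subseteq> topspace X" using K(1) x0 by (auto simp: K'_def)
  have "bump X K' x0 x = ?ind x" if "x \<in> K" for x
    using bump_in_Cp_carrier[OF tychonoff K' x0] bump_self[OF tychonoff K' x0]
      bump_vanishes[OF tychonoff K' x0] that
    by (cases "x \<in> topspace X") (auto simp: K'_def Cp_carrier_def)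
  then have "bump X K' x0 \<in> T" using K(2,3) by force
  then show "\<exists>y. y \<in> Cp_unit_ball X \<and> y \<in> T"
    using bump_in_Cp_unit_ball[OF tychonoff K' x0] by blast
qed simp

text \<open>The unit ball is \<open>(p,q)\<close>-\<open>\<E>\<close>-limited, and the indicator of a point lies in its closure; so
  if that closure is compact, every point indicator is continuous.\<close>

lemma EGP_Cp_imp_discrete:
  assumes tychonoff: "tychonoff_space X" and pq: "1 \<le> p" "p \<le> q" and EGP: "EGP p q (Cp X)"
  shows "X = discrete_topology (topspace X)"
proof (rule ccontr)
  assume "X \<noteq> discrete_topology (topspace X)"
  then obtain x0 where x0: "x0 \<in> topspace X" "\<not> openin X {x0}"
    using discrete_topology_unique[of "topspace X" X] by metis
  define ind where "ind y = (if y = x0 then 1 else 0::real)" for y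
  have "relatively_compact (Cp X) (Cp_unit_ball X)"
    using EGP Cp_unit_ball_pq_E_limited[OF tychonoff pq] by (simp add: EGP_def)
  then have "euclidean closure_of Cp_unit_ball X \<subseteq> Cp_carrier X"
    by (rule relatively_compact_Cp_closure_subset) (auto simp: Cp_unit_ball_def)
  then have "continuous_map X euclideanreal ind"
    using point_indicator_in_closure_Cp_unit_ball[OF tychonoff x0(1)]
    by (auto simp: Cp_carrier_def ind_def[abs_def])
  then have "openin X {x \<in> topspace X. ind x \<in> {1/2<..}}"
    by (rule openin_continuous_map_preimage) simp
  moreover have "{x \<in> topspace X. ind x \<in> {1/2<..}} = {x0}" using x0(1) by (auto simp: ind_def)
  ultimately show False using x0(2) by simp
qed

subsection \<open>Precompactness in the strong topology\<close>

text \<open>Bumps at distinct points of \<open>D\<close> differ by \<open>1\<close> at one of them, so no two of them lie in the same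
  translate.\<close>

lemma card_le_if_Cp_unit_ball_covered:
  assumes tychonoff: "tychonoff_space X" and D: "finite D" "D \<subseteq> topspace X" and "finite F"
    and cover: "Cp_unit_ball X \<subseteq> (\<Union>f\<in>F. (\<lambda>u. f + u) ` {u \<in> Cp_carrier X. \<forall>d\<in>D. \<bar>u d\<bar> \<le> 1/3})"
  shows "card D \<le> card F"
proof -
  define V where "V = {u \<in> Cp_carrier X. \<forall>d\<in>D. \<bar>u d\<bar> \<le> 1/3}"
  have "\<forall>d\<in>D. \<exists>f. f \<in> F \<and> bump X D d - f \<in> V"
  proof
    fix d assume "d \<in> D"
    then have "bump X D d \<in> Cp_unit_ball X"
      using bump_in_Cp_unit_ball[OF tychonoff D] D(2) by blast
    then obtain f v where "f \<in> F" "v \<in> V" "bump X D d = f + v"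
      using cover by (auto simp: V_def)
    then show "\<exists>f. f \<in> F \<and> bump X D d - f \<in> V" by (metis add_diff_cancel_left')
  qed
  then obtain c where c: "\<And>d. d \<in> D \<Longrightarrow> c d \<in> F" and V: "\<And>d. d \<in> D \<Longrightarrow> bump X D d - c d \<in> V"
    by metis
  have "inj_on c D"
  proof (rule inj_onI, rule ccontr)
    fix d1 d2 assume d: "d1 \<in> D" "d2 \<in> D" "c d1 = c d2" "d1 \<noteq> d2"
    have "\<bar>bump X D d1 d1 - c d1 d1\<bar> \<le> 1/3" "\<bar>bump X D d2 d1 - c d2 d1\<bar> \<le> 1/3"
      using V[OF d(1)] V[OF d(2)] d(1) by (auto simp: V_def)
    moreover have "bump X D d1 d1 = 1" "bump X D d2 d1 = 0"
      using bump_self[OF tychonoff D] bump_vanishes[OF tychonoff D] d D(2) by blast+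
    ultimately show False using d(3) by (simp add: abs_le_iff)
  qed
  then show ?thesis using c \<open>finite F\<close> by (intro card_inj_on_le) auto
qed

lemma functionally_bounded_evaluations_bounded:
  assumes "functionally_bounded X D" and "g \<in> Cp_carrier X"
  shows "bounded ((\<lambda>\<phi>. \<phi> g) ` evaluation X ` D)"
proof -
  have "(\<lambda>\<phi>. \<phi> g) ` evaluation X ` D = g ` D"
    unfolding image_image using assms(2) by (simp add: evaluation_def)
  then show ?thesis using assms by (simp add: Cp_carrier_def functionally_bounded_def)
qed

text \<open>The polar of the evaluations at \<open>D\<close> controls the values on \<open>D\<close>.\<close>

lemma bEGP_Cp_imp_functionally_bounded_finite:
  assumes tychonoff: "tychonoff_space X" and pq: "1 \<le> p" "p \<le> q" and bEGP: "bEGP p q (Cp X)"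
    and D: "functionally_bounded X D"
  shows "finite D"
proof (rule ccontr)
  assume "infinite D"
  have D_topspace: "D \<subseteq> topspace X" using D by (simp add: functionally_bounded_def)
  define B where "B = evaluation X ` D"
  have B_dual: "B \<subseteq> dual_space (Cp X)" by (simp add: B_def image_subset_iff evaluation_in_dual_space)
  have B_bounded: "\<forall>g\<in>topspace (Cp X). bounded ((\<lambda>\<phi>. \<phi> g) ` B)"
    unfolding B_def topspace_Cp using functionally_bounded_evaluations_bounded[OF D] by blast
  have "strongly_precompact (Cp X) (Cp_unit_ball X)"
    using bEGP Cp_unit_ball_pq_E_limited[OF tychonoff pq] by (simp add: bEGP_def)
  then have "\<exists>F. finite F \<and> F \<subseteq> topspace (Cp X) \<and>
      Cp_unit_ball X \<subseteq> (\<Union>f\<in>F. (\<lambda>u. f + u) ` {u\<in>topspace (Cp X). \<forall>\<phi>\<in>B. \<bar>\<phi> u\<bar> \<le> 1/3})"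
    unfolding strongly_precompact_def using B_dual B_bounded by (simp del: divide_const_simps)
  then obtain F where "finite F"
    and cover: "Cp_unit_ball X \<subseteq> (\<Union>f\<in>F. (\<lambda>u. f + u) ` {u\<in>topspace (Cp X). \<forall>\<phi>\<in>B. \<bar>\<phi> u\<bar> \<le> 1/3})"
    by blast
  obtain D' where D': "finite D'" "card D' = Suc (card F)" "D' \<subseteq> D"
    using infinite_arbitrarily_large[OF \<open>infinite D\<close>] by blast
  have polar: "{u\<in>topspace (Cp X). \<forall>\<phi>\<in>B. \<bar>\<phi> u\<bar> \<le> 1/3} \<subseteq> {u \<in> Cp_carrier X. \<forall>d\<in>D'. \<bar>u d\<bar> \<le> 1/3}"
  proof
    fix u assume "u \<in> {u\<in>topspace (Cp X). \<forall>\<phi>\<in>B. \<bar>\<phi> u\<bar> \<le> 1/3}"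
    then have u: "u \<in> Cp_carrier X" "\<And>\<phi>. \<phi> \<in> B \<Longrightarrow> \<bar>\<phi> u\<bar> \<le> 1/3"
      by (auto simp: topspace_Cp)
    have "\<bar>u d\<bar> \<le> 1/3" if "d \<in> D'" for d
      using u(2)[of "evaluation X d"] u(1) that D'(3) by (auto simp: B_def evaluation_def)
    then show "u \<in> {u \<in> Cp_carrier X. \<forall>d\<in>D'. \<bar>u d\<bar> \<le> 1/3}" using u(1) by simp
  qed
  have "Cp_unit_ball X \<subseteq> (\<Union>f\<in>F. (\<lambda>u. f + u) ` {u \<in> Cp_carrier X. \<forall>d\<in>D'. \<bar>u d\<bar> \<le> 1/3})"
    by (rule order_trans[OF cover]) (intro UN_mono image_mono order_refl polar)
  moreover have "D' \<subseteq> topspace X" using D'(3) D_topspace by blast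
  ultimately have "card D' \<le> card F"
    by (intro card_le_if_Cp_unit_ball_covered[OF tychonoff D'(1) _ \<open>finite F\<close>])
  then show False using D'(2) by simp
qed

subsection \<open>Weak\<open>\<^sup>*\<close> bounded sets of functionals\<close>

lemma continuous_map_if_locally_eq_continuous:
  fixes g :: "'a \<Rightarrow> real"
  assumes "\<And>x. x \<in> topspace X \<Longrightarrow>
    \<exists>W h. openin X W \<and> x \<in> W \<and> continuous_map X euclideanreal h \<and> (\<forall>y\<in>W. g y = h y)"
  shows "continuous_map X euclideanreal g"
proof -
  obtain W h where W: "\<And>x. x \<in> topspace X \<Longrightarrow> openin X (W x) \<and> x \<in> W x \<and>
      continuous_map X euclideanreal (h x) \<and> (\<forall>y\<in>W x. g y = h x y)"
    using assms by metis
  show ?thesis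
  proof (rule pasting_lemma[where I = "topspace X" and T = W and f = "\<lambda>_. g"])
    fix x assume "x \<in> topspace X"
    then show "continuous_map (subtopology X (W x)) euclideanreal g"
      using W by (metis continuous_map_eq continuous_map_from_subtopology IntD2 topspace_subtopology)
  qed (use W in auto)
qed

lemma continuous_map_suminf_locally_single:
  fixes b :: "nat \<Rightarrow> 'a \<Rightarrow> real"
  assumes cont: "\<And>j. continuous_map X euclideanreal (b j)"
    and single: "\<And>x. x \<in> topspace X \<Longrightarrow>
      \<exists>W j0. openin X W \<and> x \<in> W \<and> (\<forall>j y. j \<noteq> j0 \<longrightarrow> y \<in> W \<longrightarrow> b j y = 0)"
  shows "continuous_map X euclideanreal (\<lambda>x. \<Sum>j. b j x)"
proof (rule continuous_map_if_locally_eq_continuous)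
  fix x assume "x \<in> topspace X"
  then obtain W j0 where W: "openin X W" "x \<in> W" "\<And>j y. j \<noteq> j0 \<Longrightarrow> y \<in> W \<Longrightarrow> b j y = 0"
    using single by meson
  have "(\<Sum>j. b j y) = (\<Sum>j\<in>{j0}. b j y)" if "y \<in> W" for y
    by (rule suminf_finite) (use W(3) that in auto)
  then have "\<forall>y\<in>W. (\<Sum>j. b j y) = b j0 y" by simp
  then show "\<exists>W h. openin X W \<and> x \<in> W \<and> continuous_map X euclideanreal h \<and> (\<forall>y\<in>W. (\<Sum>j. b j y) = h y)"
    using W(1,2) cont[of j0] by blast
qed

lemma unbounded_separated_sequence:
  fixes f :: "'a \<Rightarrow> real" and K :: "'i \<Rightarrow> 'a set"
  assumes finite: "\<And>i. i \<in> I \<Longrightarrow> finite (K i)" and unbounded: "\<not> bounded (f ` (\<Union>i\<in>I. K i))"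
  obtains \<iota> :: "nat \<Rightarrow> 'i" and s :: "nat \<Rightarrow> 'a" where "\<And>k. \<iota> k \<in> I" "\<And>k. s k \<in> K (\<iota> k)"
    "\<And>k y. y \<in> (\<Union>j<k. K (\<iota> j)) \<Longrightarrow> \<bar>f y\<bar> + 2 < \<bar>f (s k)\<bar>"
proof -
  have "\<forall>r. \<exists>i s. i \<in> I \<and> s \<in> K i \<and> r < \<bar>f s\<bar>"
    using unbounded by (fastforce simp: bounded_real not_le)
  then obtain I' S where IS: "\<And>r. I' r \<in> I" "\<And>r. S r \<in> K (I' r)" "\<And>r. r < \<bar>f (S r)\<bar>"
    by metis
  define M where "M i = (\<Sum>y\<in>K i. \<bar>f y\<bar>)" for i
  \<comment> \<open>The \<open>k\<close>-th point is chosen beyond level \<open>r k\<close>, which exceeds \<open>\<bar>f\<bar>\<close> on all earlier sets by \<open>2\<close>.\<close>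
  define r where "r = rec_nat 0 (\<lambda>_ x. max x (M (I' x)) + 2)"
  have r_Suc: "r (Suc k) = max (r k) (M (I' (r k))) + 2" for k
    by (simp add: r_def)
  have r_mono: "r j \<le> r k" if "j \<le> k" for j k
    by (intro lift_Suc_mono_le[of r, OF _ that]) (simp add: r_Suc)
  show thesis
  proof (rule that[of "\<lambda>k. I' (r k)" "\<lambda>k. S (r k)"])
    fix k y assume "y \<in> (\<Union>j<k. K (I' (r j)))"
    then obtain j where "j < k" "y \<in> K (I' (r j))" by blast
    then have "\<bar>f y\<bar> \<le> M (I' (r j))"
      unfolding M_def using finite[OF IS(1)] by (intro member_le_sum) auto
    also have "\<dots> \<le> r (Suc j) - 2" by (simp add: r_Suc)
    also have "\<dots> \<le> r k - 2" using r_mono \<open>j < k\<close> by simp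
    finally show "\<bar>f y\<bar> + 2 < \<bar>f (S (r k))\<bar>" using IS(3)[of "r k"] by simp
  qed (use IS in auto)
qed

lemma separated_levels_locally_single:
  fixes f :: "'a \<Rightarrow> real" and a :: "nat \<Rightarrow> real" and b :: "nat \<Rightarrow> 'a \<Rightarrow> real"
  assumes f: "continuous_map X euclideanreal f"
    and a_unique: "\<And>i j r. \<bar>a i - r\<bar> < 1 \<Longrightarrow> \<bar>a j - r\<bar> < 1 \<Longrightarrow> i = j"
    and support: "\<And>k y. b k y \<noteq> 0 \<Longrightarrow> \<bar>\<bar>f y\<bar> - a k\<bar> < 1/2" and x: "x \<in> topspace X"
  shows "\<exists>W j0. openin X W \<and> x \<in> W \<and> (\<forall>j y. j \<noteq> j0 \<longrightarrow> y \<in> W \<longrightarrow> b j y = 0)"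
proof -
  define W where "W = {y \<in> topspace X. \<bar>\<bar>f y\<bar> - \<bar>f x\<bar>\<bar> \<in> {..<1/2}}"
  have "openin X W"
    unfolding W_def by (intro openin_continuous_map_preimage[where Y = euclideanreal] continuous_intros f) simp
  moreover have "x \<in> W" using x by (simp add: W_def)
  moreover obtain j0 where j0: "\<And>j. \<bar>a j - \<bar>f x\<bar>\<bar> < 1 \<Longrightarrow> j = j0"
    using a_unique by metis
  have "b j y = 0" if "j \<noteq> j0" "y \<in> W" for j y
  proof (rule ccontr)
    assume "b j y \<noteq> 0"
    then have "\<bar>\<bar>f y\<bar> - a j\<bar> < 1/2" by (rule support)
    moreover have "\<bar>\<bar>f y\<bar> - \<bar>f x\<bar>\<bar> < 1/2" using \<open>y \<in> W\<close> by (simp add: W_def)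
    ultimately have "\<bar>a j - \<bar>f x\<bar>\<bar> < 1" by arith
    then show False using j0 \<open>j \<noteq> j0\<close> by blast
  qed
  ultimately show ?thesis by blast
qed

text \<open>Multiplying the bumps by tents in \<open>\<bar>f\<bar>\<close> centred at the separated values \<open>\<bar>f (s k)\<bar>\<close> makes
  the family locally finite, so all its series define continuous functions.\<close>

lemma separated_bump_family:
  fixes f :: "'a \<Rightarrow> real" and K :: "nat \<Rightarrow> 'a set"
  assumes tychonoff: "tychonoff_space X" and f: "continuous_map X euclideanreal f"
    and K: "\<And>k. finite (K k)" "\<And>k. K k \<subseteq> topspace X" and s: "\<And>k. s k \<in> K k"
    and gap: "\<And>k y. y \<in> (\<Union>j<k. K j) \<Longrightarrow> \<bar>f y\<bar> + 2 < \<bar>f (s k)\<bar>"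
  obtains b :: "nat \<Rightarrow> 'a \<Rightarrow> real" where "\<And>k. b k \<in> Cp_carrier X" "\<And>k. b k (s k) = 1"
    "\<And>k y. y \<in> K k \<Longrightarrow> y \<noteq> s k \<Longrightarrow> b k y = 0"
    "\<And>k y. y \<in> (\<Union>j<k. K j) \<Longrightarrow> b k y = 0"
    "\<And>t. (\<lambda>x. \<Sum>j. t j * b j x) \<in> Cp_carrier X"
proof -
  define a where "a k = \<bar>f (s k)\<bar>" for k
  have a_gap: "a j + 2 < a k" if "j < k" for j k
    using gap[of "s j" k] s[of j] that by (auto simp: a_def)
  have a_unique: "i = j" if "\<bar>a i - r\<bar> < 1" "\<bar>a j - r\<bar> < 1" for i j r
    using a_gap[of i j] a_gap[of j i] that by (cases i j rule: linorder_cases) auto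
  define tent where "tent t = max 0 (1 - 2 * \<bar>t\<bar>)" for t :: real
  define b where "b k x = bump X (K k) (s k) x * tent (\<bar>f x\<bar> - a k)" for k x
  have s_topspace: "s k \<in> topspace X" for k using K(2) s by blast
  note bump = bump_in_Cp_carrier[OF tychonoff K(1,2) s_topspace] bump_self[OF tychonoff K(1,2) s_topspace]
    bump_vanishes[OF tychonoff K(1,2) s_topspace]
  have b_carrier: "b k \<in> Cp_carrier X" for k
    unfolding b_def[abs_def] tent_def
    by (intro Cp_carrier_mult bump continuous_intros f)
  have b_support: "\<bar>\<bar>f y\<bar> - a k\<bar> < 1/2" if "b k y \<noteq> 0" for k y
    using that by (auto simp: b_def tent_def)
  have b_later: "b k y = 0" if "y \<in> (\<Union>j<k. K j)" for k y
    using b_support gap[OF that] by (force simp: a_def)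
  have "continuous_map X euclideanreal (\<lambda>x. \<Sum>j. t j * b j x)" for t
  proof (rule continuous_map_suminf_locally_single)
    show "continuous_map X euclideanreal (\<lambda>x. t j * b j x)" for j
      using b_carrier by (intro continuous_map_real_mult_left) (simp add: Cp_carrier_def)
  next
    show "\<exists>W j0. openin X W \<and> x \<in> W \<and> (\<forall>j y. j \<noteq> j0 \<longrightarrow> y \<in> W \<longrightarrow> t j * b j y = 0)"
      if "x \<in> topspace X" for x
      using separated_levels_locally_single[where b = "\<lambda>j y. t j * b j y", OF f a_unique _ that] b_support
      by simp
  qed
  moreover have "b j x = 0" if "x \<notin> topspace X" for j x
    using b_carrier[of j] that by (simp add: Cp_carrier_def)
  ultimately have "(\<lambda>x. \<Sum>j. t j * b j x) \<in> Cp_carrier X" for t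
    by (simp add: Cp_carrier_def)
  moreover have "b k (s k) = 1" for k by (simp add: b_def bump a_def tent_def)
  moreover have "b k y = 0" if "y \<in> K k" "y \<noteq> s k" for k y
    using bump that by (simp add: b_def)
  ultimately show thesis using that b_carrier b_later by blast
qed

function hump_coeff :: "(nat \<Rightarrow> nat \<Rightarrow> real) \<Rightarrow> (nat \<Rightarrow> real) \<Rightarrow> nat \<Rightarrow> real" where
  "hump_coeff \<alpha> \<gamma> k = (real k + \<bar>\<Sum>j<k. hump_coeff \<alpha> \<gamma> j * \<alpha> k j\<bar>) / \<gamma> k"
  by auto
termination by (relation "Wellfounded.measure (\<lambda>(\<alpha>, \<gamma>, k). k)") auto

declare hump_coeff.simps [simp del]

text \<open>The coefficient of the \<open>k\<close>-th bump is chosen, knowing the earlier ones, so that it raises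
  \<open>\<phi>\<^sub>k(g)\<close> above \<open>k\<close>; later bumps vanish on the support of \<open>\<phi>\<^sub>k\<close>.\<close>

lemma gliding_hump:
  fixes \<phi> :: "nat \<Rightarrow> ('a \<Rightarrow> real) \<Rightarrow> real" and b :: "nat \<Rightarrow> 'a \<Rightarrow> real"
  assumes repr: "\<And>k. point_representation X (\<phi> k) (K k) (c k)"
    and s: "\<And>k. s k \<in> K k"
    and b_carrier: "\<And>k. b k \<in> Cp_carrier X" and b_peak: "\<And>k. b k (s k) = 1"
    and b_own: "\<And>k y. y \<in> K k \<Longrightarrow> y \<noteq> s k \<Longrightarrow> b k y = 0"
    and b_later: "\<And>k y. y \<in> (\<Union>j<k. K j) \<Longrightarrow> b k y = 0"
    and sums: "\<And>t. (\<lambda>x. \<Sum>j. t j * b j x) \<in> Cp_carrier X"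
  shows "\<exists>g\<in>Cp_carrier X. \<forall>k. real k \<le> \<phi> k g"
proof -
  have eval: "\<phi> k h = (\<Sum>y\<in>K k. c k y * h y)" if "h \<in> Cp_carrier X" for k h
    using repr[of k] that by (simp add: point_representation_def)
  have finite: "finite (K k)" for k
    using repr[of k] by (simp add: point_representation_def)
  define \<alpha> where "\<alpha> k j = \<phi> k (b j)" for k j
  define \<gamma> where "\<gamma> k = c k (s k)" for k
  have "\<gamma> k \<noteq> 0" for k
    using repr[of k] s[of k] by (simp add: point_representation_def \<gamma>_def)
  have \<alpha>_diag: "\<alpha> k k = \<gamma> k" for k
  proof -
    have "\<alpha> k k = (\<Sum>y\<in>K k. c k y * b k y)" by (simp add: \<alpha>_def eval b_carrier)
    also have "\<dots> = c k (s k) * b k (s k)"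
      using finite s by (subst sum.mono_neutral_right[of "K k" "{s k}"]) (auto simp: b_own)
    finally show ?thesis by (simp add: \<gamma>_def b_peak)
  qed
  define t where "t = hump_coeff \<alpha> \<gamma>"
  define g where "g = (\<lambda>x. \<Sum>j. t j * b j x)"
  have g: "g \<in> Cp_carrier X" unfolding g_def by (rule sums)
  have "real k \<le> \<phi> k g" for k
  proof -
    have g_on_K: "g y = (\<Sum>j\<le>k. t j * b j y)" if "y \<in> K k" for y
      unfolding g_def by (rule suminf_finite) (use b_later[of y] that in \<open>auto simp: not_le\<close>)
    have "\<phi> k g = (\<Sum>y\<in>K k. c k y * (\<Sum>j\<le>k. t j * b j y))"
      unfolding eval[OF g] by (intro sum.cong refl) (simp add: g_on_K)
    also have "\<dots> = (\<Sum>j\<le>k. t j * \<alpha> k j)"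
      unfolding sum_distrib_left
      by (subst sum.swap) (simp add: \<alpha>_def eval b_carrier sum_distrib_left mult_ac)
    also have "\<dots> = (\<Sum>j<k. t j * \<alpha> k j) + t k * \<gamma> k"
      by (simp add: lessThan_Suc_atMost[symmetric] \<alpha>_diag)
    finally have "\<phi> k g = (\<Sum>j<k. t j * \<alpha> k j) + t k * \<gamma> k" .
    moreover have "t k * \<gamma> k = real k + \<bar>\<Sum>j<k. t j * \<alpha> k j\<bar>"
      using \<open>\<gamma> k \<noteq> 0\<close> by (simp add: t_def hump_coeff.simps[of \<alpha> \<gamma> k])
    ultimately show ?thesis by linarith
  qed
  then show ?thesis using g by blast
qed

lemma pointwise_bounded_dual_supports_functionally_bounded:
  assumes tychonoff: "tychonoff_space X"
    and repr: "\<And>\<phi>. \<phi> \<in> B \<Longrightarrow> point_representation X \<phi> (K \<phi>) (c \<phi>)"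
    and bounded: "\<And>g. g \<in> Cp_carrier X \<Longrightarrow> bounded ((\<lambda>\<phi>. \<phi> g) ` B)"
  shows "functionally_bounded X (\<Union>\<phi>\<in>B. K \<phi>)"
  unfolding functionally_bounded_def
proof (intro conjI allI impI)
  show "(\<Union>\<phi>\<in>B. K \<phi>) \<subseteq> topspace X" using repr by (auto simp: point_representation_def)
next
  fix f assume f: "continuous_map X euclideanreal f"
  show "bounded (f ` (\<Union>\<phi>\<in>B. K \<phi>))"
  proof (rule ccontr)
    have finite: "finite (K \<phi>)" "K \<phi> \<subseteq> topspace X" if "\<phi> \<in> B" for \<phi>
      using repr[OF that] by (simp_all add: point_representation_def)
    assume unbounded: "\<not> ?thesis"
    obtain \<psi> :: "nat \<Rightarrow> ('a \<Rightarrow> real) \<Rightarrow> real" and s :: "nat \<Rightarrow> 'a"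
      where \<psi>: "\<And>k. \<psi> k \<in> B" and s: "\<And>k. s k \<in> K (\<psi> k)"
      and gap: "\<And>k y. y \<in> (\<Union>j<k. K (\<psi> j)) \<Longrightarrow> \<bar>f y\<bar> + 2 < \<bar>f (s k)\<bar>"
      using unbounded_separated_sequence[OF finite(1) unbounded] by blast
    define L where "L k = K (\<psi> k)" for k
    have L: "finite (L k)" "L k \<subseteq> topspace X" "s k \<in> L k"
      "point_representation X (\<psi> k) (L k) (c (\<psi> k))" for k
      using finite \<psi> s repr by (simp_all add: L_def)
    have gap_L: "\<bar>f y\<bar> + 2 < \<bar>f (s k)\<bar>" if "y \<in> (\<Union>j<k. L j)" for k y
      using gap that by (simp add: L_def)
    obtain b :: "nat \<Rightarrow> 'a \<Rightarrow> real" where b: "\<And>k. b k \<in> Cp_carrier X" "\<And>k. b k (s k) = 1"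
      "\<And>k y. y \<in> L k \<Longrightarrow> y \<noteq> s k \<Longrightarrow> b k y = 0"
      "\<And>k y. y \<in> (\<Union>j<k. L j) \<Longrightarrow> b k y = 0"
      "\<And>t. (\<lambda>x. \<Sum>j. t j * b j x) \<in> Cp_carrier X"
      using separated_bump_family[where K = L and s = s, OF tychonoff f L(1,2,3) gap_L] by blast
    obtain g where g: "g \<in> Cp_carrier X" and large: "\<And>k. real k \<le> \<psi> k g"
      using gliding_hump[OF L(4) L(3) b] by blast
    obtain M where M: "\<And>\<phi>. \<phi> \<in> B \<Longrightarrow> \<bar>\<phi> g\<bar> \<le> M"
      using bounded[OF g] by (auto simp: bounded_real)
    have "real (nat \<lceil>M\<rceil> + 1) \<le> M"
      by (rule order_trans[OF large order_trans[OF abs_ge_self M[OF \<psi>]]])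
    then show False by linarith
  qed
qed

lemma point_representation_coefficient:
  assumes tychonoff: "tychonoff_space X" and repr: "point_representation X \<phi> K c"
    and S: "finite S" "S \<subseteq> topspace X" "K \<subseteq> S" and "x \<in> K"
  shows "c x = \<phi> (bump X S x)"
proof -
  have x: "x \<in> topspace X" using S(2,3) \<open>x \<in> K\<close> by blast
  have "\<phi> (bump X S x) = (\<Sum>y\<in>K. c y * bump X S x y)"
    using repr bump_in_Cp_carrier[OF tychonoff S(1,2) x] by (simp add: point_representation_def)
  also have "\<dots> = c x * bump X S x x"
    using repr S(3) \<open>x \<in> K\<close> bump_vanishes[OF tychonoff S(1,2) x]
    by (subst sum.mono_neutral_right[of K "{x}"]) (auto simp: point_representation_def)
  finally show ?thesis using bump_self[OF tychonoff S(1,2) x] by simp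
qed

lemma pointwise_bounded_dual_uniform_estimate:
  assumes tychonoff: "tychonoff_space X"
    and repr: "\<And>\<phi>. \<phi> \<in> B \<Longrightarrow> point_representation X \<phi> (K \<phi>) (c \<phi>)"
    and S: "finite S" "S \<subseteq> topspace X" "\<And>\<phi>. \<phi> \<in> B \<Longrightarrow> K \<phi> \<subseteq> S"
    and bounded: "\<And>g. g \<in> Cp_carrier X \<Longrightarrow> bounded ((\<lambda>\<phi>. \<phi> g) ` B)"
  obtains C where "C \<ge> 0" "\<And>\<phi> u. \<phi> \<in> B \<Longrightarrow> u \<in> Cp_carrier X \<Longrightarrow> \<bar>\<phi> u\<bar> \<le> C * (\<Sum>x\<in>S. \<bar>u x\<bar>)"
proof -
  have "\<forall>x\<in>S. \<exists>M. \<forall>\<phi>\<in>B. \<bar>\<phi> (bump X S x)\<bar> \<le> M"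
    using bounded bump_in_Cp_carrier[OF tychonoff S(1,2)] S(2) by (force simp: bounded_real)
  then obtain M where M: "\<And>x \<phi>. x \<in> S \<Longrightarrow> \<phi> \<in> B \<Longrightarrow> \<bar>\<phi> (bump X S x)\<bar> \<le> M x"
    by metis
  define C where "C = (\<Sum>x\<in>S. \<bar>M x\<bar>)"
  have "C \<ge> 0" by (simp add: C_def sum_nonneg)
  have coefficient: "\<bar>c \<phi> x\<bar> \<le> C" if "\<phi> \<in> B" "x \<in> K \<phi>" for \<phi> x
  proof -
    have "x \<in> S" using S(3)[OF that(1)] that(2) by blast
    have "\<bar>c \<phi> x\<bar> \<le> \<bar>M x\<bar>"
      using M[OF \<open>x \<in> S\<close> that(1)] point_representation_coefficient[OF tychonoff repr[OF that(1)]
          S(1,2) S(3)[OF that(1)] that(2)] by simp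
    also have "\<dots> \<le> C" unfolding C_def using \<open>x \<in> S\<close> S(1) by (intro member_le_sum) auto
    finally show ?thesis .
  qed
  have "\<bar>\<phi> u\<bar> \<le> C * (\<Sum>x\<in>S. \<bar>u x\<bar>)" if "\<phi> \<in> B" "u \<in> Cp_carrier X" for \<phi> u
  proof -
    have "\<bar>\<phi> u\<bar> = \<bar>\<Sum>x\<in>K \<phi>. c \<phi> x * u x\<bar>"
      using repr[OF that(1)] that(2) by (simp add: point_representation_def)
    also have "\<dots> \<le> (\<Sum>x\<in>K \<phi>. \<bar>c \<phi> x\<bar> * \<bar>u x\<bar>)"
      unfolding abs_mult[symmetric] by (rule sum_abs)
    also have "\<dots> \<le> (\<Sum>x\<in>K \<phi>. C * \<bar>u x\<bar>)"
      using coefficient[OF that(1)] by (intro sum_mono mult_right_mono) auto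
    also have "\<dots> \<le> (\<Sum>x\<in>S. C * \<bar>u x\<bar>)"
      using \<open>C \<ge> 0\<close> by (intro sum_mono2[OF S(1) S(3)[OF that(1)]]) auto
    finally show ?thesis by (simp add: sum_distrib_left)
  qed
  with \<open>C \<ge> 0\<close> show thesis using that by blast
qed

text \<open>If functionally bounded sets are finite, the supports of a weak\<open>\<^sup>*\<close> bounded set of functionals
  lie in a finite set \<open>S\<close>, so its polar contains a pointwise box at \<open>S\<close>.\<close>

lemma strong_zero_nbhd_contains_box:
  assumes tychonoff: "tychonoff_space X"
    and finite_fb: "\<And>A. functionally_bounded X A \<Longrightarrow> finite A"
    and B: "B \<subseteq> dual_space (Cp X)" and bounded: "\<And>g. g \<in> Cp_carrier X \<Longrightarrow> bounded ((\<lambda>\<phi>. \<phi> g) ` B)"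
    and "\<epsilon> > 0"
  obtains S \<delta> where "finite S" "S \<subseteq> topspace X" "\<delta> > 0"
    "\<And>u \<phi>. u \<in> Cp_carrier X \<Longrightarrow> (\<forall>x\<in>S. \<bar>u x\<bar> < \<delta>) \<Longrightarrow> \<phi> \<in> B \<Longrightarrow> \<bar>\<phi> u\<bar> \<le> \<epsilon>"
proof -
  have "\<forall>\<phi>\<in>B. \<exists>K c. point_representation X \<phi> K c"
    using dual_Cp_point_representation[OF tychonoff] B by blast
  then obtain K c where repr: "\<And>\<phi>. \<phi> \<in> B \<Longrightarrow> point_representation X \<phi> (K \<phi>) (c \<phi>)"
    by metis
  define S where "S = (\<Union>\<phi>\<in>B. K \<phi>)"
  have "functionally_bounded X S"
    unfolding S_def by (rule pointwise_bounded_dual_supports_functionally_bounded[OF tychonoff repr bounded])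
  then have S: "finite S" "S \<subseteq> topspace X"
    using finite_fb by (auto simp: functionally_bounded_def)
  moreover have "K \<phi> \<subseteq> S" if "\<phi> \<in> B" for \<phi> using that by (auto simp: S_def)
  ultimately obtain C where "C \<ge> 0"
    and estimate: "\<And>\<phi> u. \<phi> \<in> B \<Longrightarrow> u \<in> Cp_carrier X \<Longrightarrow> \<bar>\<phi> u\<bar> \<le> C * (\<Sum>x\<in>S. \<bar>u x\<bar>)"
    using pointwise_bounded_dual_uniform_estimate[OF tychonoff repr _ _ _ bounded] by metis
  define \<delta> where "\<delta> = \<epsilon> / ((C + 1) * (real (card S) + 1))"
  have "\<delta> > 0" using \<open>\<epsilon> > 0\<close> \<open>C \<ge> 0\<close> by (simp add: \<delta>_def)
  show thesis
  proof (rule that[OF S \<open>\<delta> > 0\<close>])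
    fix u \<phi> assume u: "u \<in> Cp_carrier X" "\<forall>x\<in>S. \<bar>u x\<bar> < \<delta>" and "\<phi> \<in> B"
    have "(\<Sum>x\<in>S. \<bar>u x\<bar>) \<le> real (card S) * \<delta>"
      using sum_bounded_above[of S "\<lambda>x. \<bar>u x\<bar>" \<delta>] u(2) by (simp add: less_imp_le)
    then have "\<bar>\<phi> u\<bar> \<le> C * (real (card S) * \<delta>)"
      using estimate[OF \<open>\<phi> \<in> B\<close> u(1)] \<open>C \<ge> 0\<close> by (meson mult_left_mono order_trans)
    also have "\<dots> \<le> (C + 1) * ((real (card S) + 1) * \<delta>)"
      using \<open>C \<ge> 0\<close> \<open>\<delta> > 0\<close> by (intro mult_mono) auto
    also have "\<dots> = \<epsilon>" using \<open>C \<ge> 0\<close> by (simp add: \<delta>_def)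
    finally show "\<bar>\<phi> u\<bar> \<le> \<epsilon>" .
  qed
qed

lemma functionally_bounded_finite_imp_bEGP_Cp:
  assumes tychonoff: "tychonoff_space X" and "1 \<le> p"
    and finite_fb: "\<And>A. functionally_bounded X A \<Longrightarrow> finite A"
  shows "bEGP p q (Cp X)"
  unfolding bEGP_def strongly_precompact_def
proof (intro allI impI)
  fix A B and \<epsilon> :: real
  assume A: "pq_E_limited p q (Cp X) A" and B: "B \<subseteq> dual_space (Cp X)"
    and bounded: "\<forall>x\<in>topspace (Cp X). bounded ((\<lambda>\<phi>. \<phi> x) ` B)" and "\<epsilon> > 0"
  obtain S \<delta> where S: "finite S" "S \<subseteq> topspace X" "\<delta> > 0"
    and small: "\<And>u \<phi>. u \<in> Cp_carrier X \<Longrightarrow> (\<forall>x\<in>S. \<bar>u x\<bar> < \<delta>) \<Longrightarrow> \<phi> \<in> B \<Longrightarrow> \<bar>\<phi> u\<bar> \<le> \<epsilon>"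
    using strong_zero_nbhd_contains_box[OF tychonoff finite_fb B _ \<open>\<epsilon> > 0\<close>] bounded
    by (metis topspace_Cp)
  obtain F where "finite F" "F \<subseteq> topspace (Cp X)"
    and cover: "A \<subseteq> (\<Union>f\<in>F. (\<lambda>u. f + u) ` {u \<in> Cp_carrier X. \<forall>x\<in>S. \<bar>u x\<bar> < \<delta>})"
    using pq_E_limited_finite_cover[OF tychonoff \<open>1 \<le> p\<close> A S] by blast
  moreover have "(\<Union>f\<in>F. (\<lambda>u. f + u) ` {u \<in> Cp_carrier X. \<forall>x\<in>S. \<bar>u x\<bar> < \<delta>})
      \<subseteq> (\<Union>f\<in>F. (\<lambda>u. f + u) ` {u\<in>topspace (Cp X). \<forall>\<phi>\<in>B. \<bar>\<phi> u\<bar> \<le> \<epsilon>})"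
    by (intro UN_mono image_mono order_refl) (auto simp: topspace_Cp intro: small)
  ultimately show "\<exists>F. finite F \<and> F \<subseteq> topspace (Cp X) \<and>
      A \<subseteq> (\<Union>f\<in>F. (\<lambda>u. f + u) ` {u\<in>topspace (Cp X). \<forall>\<phi>\<in>B. \<bar>\<phi> u\<bar> \<le> \<epsilon>})"
    by (meson order_trans)
qed

theorem theoremt:
  fixes p q :: ereal and X :: "'a topology"
  assumes "1 \<le> p" and "p \<le> q" and "tychonoff_space X"
  shows "(EGP p q (Cp X) \<longleftrightarrow> X = discrete_topology (topspace X))
       \<and> (bEGP p q (Cp X) \<longleftrightarrow> (\<forall>A. functionally_bounded X A \<longrightarrow> finite A))
       \<and> prEGP p q (Cp X) \<and> prGP p q (Cp X)"
proof (intro conjI iffI allI impI)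
  show "X = discrete_topology (topspace X)" if "EGP p q (Cp X)"
    using EGP_Cp_imp_discrete[OF assms(3,1,2) that] .
  show "EGP p q (Cp X)" if "X = discrete_topology (topspace X)"
    using EGP_Cp_discrete[OF assms(1) that] .
  show "finite A" if "bEGP p q (Cp X)" "functionally_bounded X A" for A
    using bEGP_Cp_imp_functionally_bounded_finite[OF assms(3,1,2) that] .
  show "bEGP p q (Cp X)" if "\<forall>A. functionally_bounded X A \<longrightarrow> finite A"
    using functionally_bounded_finite_imp_bEGP_Cp[OF assms(3,1)] that by blast
  show "prEGP p q (Cp X)" using prEGP_Cp[OF assms(3,1)] .
  show "prGP p q (Cp X)" using prGP_Cp[OF assms(3,1)] .
qed

end
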